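(* Let $1<p<\infty$, let $U\in B(l^p(\mathbb{N}))$ be the unilateral shift $Ue_n=e_{n+1}$ ($n\ge1$) and $B\in B(l^p(\mathbb{Z}))$ the bilateral shift $Be_n=e_{n+1}$ ($n\in\mathbb{Z}$). Then $U$ is approximately similar to $U\oplus B\oplus B\oplus\cdots$ (acting on the $l^p$-direct sum $l^p(\mathbb{N})\oplus l^p(\mathbb{Z})\oplus l^p(\mathbb{Z})\oplus\cdots$).
   Context: $(e_j)$ denotes the canonical basis. Operators $T$ on $\mathcal{Y}_1$ and $X$ on $\mathcal{Y}_2$ are approximately similar if there exist $\lambda\ge1$ and invertible $S_n:\mathcal{Y}_1\to\mathcal{Y}_2$ with $\|S_n\|\|S_n^{-1}\|\le\lambda$, $X-S_nTS_n^{-1}$ compact for all $n$, and $\|X-S_nTS_n^{-1}\|\to0$. *)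

theory Defs
  imports "HOL-Analysis.Analysis"
begin

definition lp :: "real \<Rightarrow> ('i \<Rightarrow> complex) set" where
  "lp p = {x. (\<lambda>i. cmod (x i) powr p) summable_on UNIV}"

definition lp_norm :: "real \<Rightarrow> ('i \<Rightarrow> complex) \<Rightarrow> real" where
  "lp_norm p x = (infsum (\<lambda>i. cmod (x i) powr p) UNIV) powr (1 / p)"

definition bounded_op :: "real \<Rightarrow> (('i \<Rightarrow> complex) \<Rightarrow> ('j \<Rightarrow> complex)) \<Rightarrow> bool" where
  "bounded_op p T \<longleftrightarrow>
     (\<forall>x\<in>lp p. T x \<in> lp p) \<and>
     (\<forall>x\<in>lp p. \<forall>y\<in>lp p. T (\<lambda>i. x i + y i) = (\<lambda>j. T x j + T y j)) \<and>
     (\<forall>c. \<forall>x\<in>lp p. T (\<lambda>i. c * x i) = (\<lambda>j. c * T x j)) \<and>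
     (\<exists>C. \<forall>x\<in>lp p. lp_norm p (T x) \<le> C * lp_norm p x)"

definition op_norm :: "real \<Rightarrow> (('i \<Rightarrow> complex) \<Rightarrow> ('j \<Rightarrow> complex)) \<Rightarrow> real" where
  "op_norm p T = (SUP x\<in>{x \<in> lp p. lp_norm p x \<le> 1}. lp_norm p (T x))"

definition compact_op :: "real \<Rightarrow> (('i \<Rightarrow> complex) \<Rightarrow> ('j \<Rightarrow> complex)) \<Rightarrow> bool" where
  "compact_op p T \<longleftrightarrow> bounded_op p T \<and>
     (\<forall>x :: nat \<Rightarrow> ('i \<Rightarrow> complex). (\<forall>k. x k \<in> lp p \<and> lp_norm p (x k) \<le> 1) \<longrightarrow>
        (\<exists>r y. strict_mono r \<and> y \<in> lp p \<and>
               (\<lambda>k. lp_norm p (\<lambda>j. T (x (r k)) j - y j)) \<longlonglongrightarrow> 0))"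

definition approx_similar :: "real \<Rightarrow> (('i \<Rightarrow> complex) \<Rightarrow> ('i \<Rightarrow> complex))
      \<Rightarrow> (('j \<Rightarrow> complex) \<Rightarrow> ('j \<Rightarrow> complex)) \<Rightarrow> bool" where
  "approx_similar p T X \<longleftrightarrow>
     (\<exists>lam\<ge>1. \<exists>(S :: nat \<Rightarrow> ('i \<Rightarrow> complex) \<Rightarrow> ('j \<Rightarrow> complex))
             (Sinv :: nat \<Rightarrow> ('j \<Rightarrow> complex) \<Rightarrow> ('i \<Rightarrow> complex)).
        (\<forall>n. bounded_op p (S n) \<and> bounded_op p (Sinv n) \<and>
             (\<forall>x\<in>lp p. Sinv n (S n x) = x) \<and> (\<forall>y\<in>lp p. S n (Sinv n y) = y) \<and>
             op_norm p (S n) * op_norm p (Sinv n) \<le> lam \<and>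
             compact_op p (\<lambda>y j. X y j - S n (T (Sinv n y)) j)) \<and>
        (\<lambda>n. op_norm p (\<lambda>y j. X y j - S n (T (Sinv n y)) j)) \<longlonglongrightarrow> 0)"

text \<open>Unilateral shift on l^p(N) (N indexed from 0 here): e_n |-> e_(n+1).\<close>

definition ushift :: "(nat \<Rightarrow> complex) \<Rightarrow> (nat \<Rightarrow> complex)" where
  "ushift x = (\<lambda>n. if n = 0 then 0 else x (n - 1))"

definition bshift :: "(int \<Rightarrow> complex) \<Rightarrow> (int \<Rightarrow> complex)" where
  "bshift x = (\<lambda>n. x (n - 1))"

text \<open>l^p direct sum Y_0 (+) Y_1 (+) Y_2 (+) ... with Y_0 = l^p(A), Y_k = l^p(B) (k >= 1),
  identified with l^p(A + nat * B): Inl a is coordinate a of the 0-th summand,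
  Inr (k, b) is coordinate b of the (k+1)-th summand.\<close>

definition dsum_op :: "(('a \<Rightarrow> complex) \<Rightarrow> ('a \<Rightarrow> complex))
      \<Rightarrow> (nat \<Rightarrow> ('b \<Rightarrow> complex) \<Rightarrow> ('b \<Rightarrow> complex))
      \<Rightarrow> (('a + nat \<times> 'b) \<Rightarrow> complex) \<Rightarrow> (('a + nat \<times> 'b) \<Rightarrow> complex)" where
  "dsum_op T R x = (\<lambda>i. case i of
       Inl a \<Rightarrow> T (\<lambda>a'. x (Inl a')) a
     | Inr (k, b) \<Rightarrow> R k (\<lambda>b'. x (Inr (k, b'))) b)"

end

theory Submission
  imports Defs "HOL-Library.Diagonal_Subsequence" "HOL-Library.Nat_Bijection"
begin

text \<open>Split the positions $1, 2, \ldots$ of $l^p(\mathbb{N})$ into blocks of growing length and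
  pair coordinates into chains of length $w > L$. Composing the shift with the transpositions
  of the last pair of every chain gives a permutation of the coordinates which is, after
  relabelling, exactly $U \oplus B \oplus B \oplus \cdots$. A transposition is far from the
  identity, but along a chain of length $w$ it can be reached gradually: rotate the $s$-th pair by
  the angle $\pi s / w$ (a $2 \times 2$ matrix with eigenvalues $1$ and $e^{i \pi s/w}$). The
  resulting similarities $S_L$ satisfy $\|S_L\|, \|S_L^{-1}\| \le 4$, and the difference
  $U \oplus B \oplus \cdots - S_L U S_L^{-1}$ is a two-term weighted composition operator whose
  weights have modulus at most $\pi / (2w) \le \pi / (2 (L+1))$. Since the chain lengths grow,
  only finitely many weights exceed any $\varepsilon > 0$, so the difference is compact, and its
  norm is $O(1/L)$.\<close>

section \<open>Estimates in $l^p$\<close>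

definition lp_mass :: "real \<Rightarrow> ('i \<Rightarrow> complex) \<Rightarrow> real" where
  "lp_mass p x = infsum (\<lambda>i. cmod (x i) powr p) UNIV"

lemma lp_mass_nonneg [simp]: "0 \<le> lp_mass p x"
  unfolding lp_mass_def by (intro infsum_nonneg) auto

lemma lp_norm_eq: "lp_norm p x = lp_mass p x powr (1 / p)"
  by (simp add: lp_norm_def lp_mass_def)

lemma lp_norm_nonneg: "0 \<le> lp_norm p x"
  by (simp add: lp_norm_def)

lemma lp_norm_powr: "p > 0 \<Longrightarrow> lp_norm p x powr p = lp_mass p x"
  using lp_mass_nonneg[of p x] by (simp add: lp_norm_eq powr_powr)

lemma zero_in_lp: "(\<lambda>_. 0) \<in> lp p"
  by (simp add: lp_def)

lemma summable_on_infsum_le_of_finite_sums: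
  fixes f :: "'a \<Rightarrow> real"
  assumes "\<And>x. f x \<ge> 0" "\<And>F. finite F \<Longrightarrow> sum f F \<le> B"
  shows "f summable_on UNIV" "infsum f UNIV \<le> B"
proof -
  show s: "f summable_on UNIV"
    by (rule nonneg_bdd_above_summable_on) (use assms in \<open>auto intro!: bdd_aboveI2\<close>)
  show "infsum f UNIV \<le> B" by (rule infsum_le_finite_sums[OF s]) (use assms in auto)
qed

lemma lp_memberI:
  assumes "\<And>F. finite F \<Longrightarrow> (\<Sum>i\<in>F. cmod (x i) powr p) \<le> B"
  shows "x \<in> lp p" "lp_mass p x \<le> B"
  using summable_on_infsum_le_of_finite_sums[of "\<lambda>i. cmod (x i) powr p", OF _ assms]
  by (auto simp: lp_def lp_mass_def)

lemma sum_le_lp_mass: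
  assumes "x \<in> lp p" "finite F"
  shows "(\<Sum>i\<in>F. cmod (x i) powr p) \<le> lp_mass p x"
  using assms unfolding lp_def lp_mass_def by (intro finite_sum_le_infsum) auto

lemma norm_le_lp_norm:
  assumes "x \<in> lp p" "p > 0"
  shows "cmod (x i) \<le> lp_norm p x"
proof -
  have "cmod (x i) powr p \<le> lp_norm p x powr p"
    using sum_le_lp_mass[OF assms(1), of "{i}"] by (simp add: lp_norm_powr[OF assms(2)])
  thus ?thesis using assms(2) by (meson not_le powr_less_mono2 lp_norm_nonneg)
qed

lemma norm_add_powr_le:
  fixes a b :: "'a::real_normed_vector"
  assumes "p \<ge> 0"
  shows "norm (a + b) powr p \<le> 2 powr p * (norm a powr p + norm b powr p)"
proof -
  have "norm (a + b) powr p \<le> (2 * max (norm a) (norm b)) powr p"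
    using assms by (intro powr_mono2 order.trans[OF norm_triangle_ineq]) auto
  also have "\<dots> = 2 powr p * max (norm a) (norm b) powr p" by (simp add: powr_mult)
  also have "max (norm a) (norm b) powr p \<le> norm a powr p + norm b powr p" by (simp add: max_def)
  hence "2 powr p * max (norm a) (norm b) powr p \<le> 2 powr p * (norm a powr p + norm b powr p)"
    by simp
  finally show ?thesis .
qed

lemma op_norm_le:
  assumes "\<And>x. x \<in> lp p \<Longrightarrow> lp_norm p (T x) \<le> C * lp_norm p x" "0 \<le> C"
  shows "op_norm p T \<le> C" "0 \<le> op_norm p T"
proof -
  have ne: "(\<lambda>_. 0) \<in> {x \<in> lp p. lp_norm p x \<le> 1}" by (simp add: zero_in_lp lp_norm_def)
  have bnd: "lp_norm p (T x) \<le> C" if "x \<in> {x \<in> lp p. lp_norm p x \<le> 1}" for x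
  proof -
    have "lp_norm p (T x) \<le> C * lp_norm p x" using that assms by auto
    also have "\<dots> \<le> C * 1" using that assms by (intro mult_left_mono) auto
    finally show ?thesis by simp
  qed
  show "op_norm p T \<le> C" unfolding op_norm_def
    by (rule cSUP_least) (use ne bnd in auto)
  have "lp_norm p (T (\<lambda>_. 0)) \<le> op_norm p T" unfolding op_norm_def
    by (rule cSUP_upper[OF ne]) (use bnd in \<open>auto intro!: bdd_aboveI2\<close>)
  thus "0 \<le> op_norm p T" using lp_norm_nonneg order_trans by blast
qed

lemma bounded_seq_pointwise_convergent_subseq:
  fixes F :: "nat \<Rightarrow> 'a::countable \<Rightarrow> complex"
  assumes "\<And>k t. cmod (F k t) \<le> B"
  shows "\<exists>r. strict_mono r \<and> (\<forall>t. convergent (\<lambda>j. F (r j) t))"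
proof -
  define P where "P n r \<longleftrightarrow> convergent (\<lambda>j. F (r j) (from_nat n :: 'a))" for n and r :: "nat \<Rightarrow> nat"
  interpret subseqs P
  proof
    fix n and s :: "nat \<Rightarrow> nat" assume "strict_mono s"
    have "bounded (range (\<lambda>j. F (s j) (from_nat n :: 'a)))"
      unfolding bounded_iff using assms by auto
    then obtain l r' where "strict_mono r'" "((\<lambda>j. F (s j) (from_nat n :: 'a)) \<circ> r') \<longlonglongrightarrow> l"
      using bounded_imp_convergent_subsequence by blast
    thus "\<exists>r'. strict_mono r' \<and> P n (s \<circ> r')"
      unfolding P_def by (auto simp: o_def convergent_def)
  qed
  have stable: "P n (s \<circ> r)" if "strict_mono r" "P n s" for r s n
    using convergent_subseq_convergent[OF that(2)[unfolded P_def] that(1)]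
      by (simp add: P_def o_def)
  have "convergent (\<lambda>j. F (diagseq j) t)" for t
  proof -
    have "P (to_nat t) (diagseq \<circ> (+) (Suc (to_nat t)))"
      by (rule diagseq_holds) (use stable in blast)
    hence "convergent (\<lambda>j. F (diagseq (j + Suc (to_nat t))) t)"
      unfolding P_def by (simp add: o_def add.commute)
    thus ?thesis using convergent_ignore_initial_segment[of "\<lambda>j. F (diagseq j) t" "Suc (to_nat t)"]
      by simp
  qed
  thus ?thesis using subseq_diagseq by blast
qed

lemma lp_tendsto_of_pointwise_uniform_tails:
  fixes F :: "nat \<Rightarrow> 'a \<Rightarrow> complex"
  assumes p: "p > 0"
    and lim: "\<And>t. (\<lambda>j. F j t) \<longlonglongrightarrow> g t"
    and tails: "\<And>e. e > 0 \<Longrightarrow> \<exists>E. finite E \<and>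
                  (\<forall>j H. finite H \<longrightarrow> H \<inter> E = {} \<longrightarrow> (\<Sum>t\<in>H. cmod (F j t) powr p) \<le> e)"
  shows "g \<in> lp p" "(\<lambda>j. lp_norm p (\<lambda>t. F j t - g t)) \<longlonglongrightarrow> 0"
proof -
  have sum_lim: "(\<lambda>j. \<Sum>t\<in>H. cmod (F j t) powr p) \<longlonglongrightarrow> (\<Sum>t\<in>H. cmod (g t) powr p)" for H
    by (intro tendsto_sum tendsto_powr' tendsto_norm lim tendsto_const) (use p in auto)
  have g_tails: "\<exists>E. finite E \<and> (\<forall>H. finite H \<longrightarrow> H \<inter> E = {} \<longrightarrow>
      (\<forall>j. (\<Sum>t\<in>H. cmod (F j t) powr p) \<le> e) \<and> (\<Sum>t\<in>H. cmod (g t) powr p) \<le> e)" if e: "e > 0" for e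
  proof -
    obtain E where E: "finite E" "\<And>j H. finite H \<Longrightarrow> H \<inter> E = {} \<Longrightarrow> (\<Sum>t\<in>H. cmod (F j t) powr p) \<le> e"
      using tails[OF e] by blast
    have "(\<Sum>t\<in>H. cmod (g t) powr p) \<le> e" if "finite H" "H \<inter> E = {}" for H
      by (rule LIMSEQ_le_const2[OF sum_lim]) (use E(2) that in blast)
    thus ?thesis using E by blast
  qed
  show "g \<in> lp p"
  proof -
    obtain E where E: "finite E" "\<And>H. finite H \<Longrightarrow> H \<inter> E = {} \<Longrightarrow> (\<Sum>t\<in>H. cmod (g t) powr p) \<le> 1"
      using g_tails[of 1] by auto
    have "(\<Sum>t\<in>H. cmod (g t) powr p) \<le> (\<Sum>t\<in>E. cmod (g t) powr p) + 1" if H: "finite H" for H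
    proof -
      have "(\<Sum>t\<in>H. cmod (g t) powr p) = (\<Sum>t\<in>H \<inter> E. cmod (g t) powr p)
          + (\<Sum>t\<in>H - E. cmod (g t) powr p)"
        by (rule sum.Int_Diff[OF H])
      also have "(\<Sum>t\<in>H \<inter> E. cmod (g t) powr p) \<le> (\<Sum>t\<in>E. cmod (g t) powr p)"
        using E(1) by (intro sum_mono2) auto
      also have "(\<Sum>t\<in>H - E. cmod (g t) powr p) \<le> 1" using H by (intro E(2)) auto
      finally show ?thesis by simp
    qed
    thus ?thesis by (rule lp_memberI)
  qed
  have "(\<lambda>j. lp_mass p (\<lambda>t. F j t - g t)) \<longlonglongrightarrow> 0"
  proof (rule LIMSEQ_I)
    fix e :: real assume e: "e > 0"
    define e' where "e' = e / 4 / 2 powr p"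
    have e': "e' > 0" "2 powr p * e' = e / 4" using e by (simp_all add: e'_def)
    obtain E where E: "finite E" and E_tail: "\<forall>H. finite H \<longrightarrow> H \<inter> E = {} \<longrightarrow>
        (\<forall>j. (\<Sum>t\<in>H. cmod (F j t) powr p) \<le> e') \<and> (\<Sum>t\<in>H. cmod (g t) powr p) \<le> e'"
      using g_tails[OF e'(1)] by blast
    have "(\<lambda>j. \<Sum>t\<in>E. cmod (F j t - g t) powr p) \<longlonglongrightarrow> 0"
    proof (rule tendsto_null_sum)
      fix t
      have "(\<lambda>j. cmod (F j t - g t)) \<longlonglongrightarrow> 0"
        using lim[of t] by (simp add: tendsto_norm_zero_iff LIM_zero_iff)
      thus "(\<lambda>j. cmod (F j t - g t) powr p) \<longlonglongrightarrow> 0"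
        using p by (intro tendsto_zero_powrI[OF _ tendsto_const]) auto
    qed
    then obtain N where N: "\<And>j. j \<ge> N \<Longrightarrow> (\<Sum>t\<in>E. cmod (F j t - g t) powr p) < e / 4"
      using LIMSEQ_D[of _ 0 "e / 4"] e by fastforce
    have bound: "lp_mass p (\<lambda>t. F j t - g t) \<le> e / 4 + e / 2" if j: "j \<ge> N" for j
    proof (rule lp_memberI(2))
      fix H :: "'a set" assume H: "finite H"
      have "(\<Sum>t\<in>H. cmod (F j t - g t) powr p) = (\<Sum>t\<in>H \<inter> E. cmod (F j t - g t) powr p)
          + (\<Sum>t\<in>H - E. cmod (F j t - g t) powr p)"
        by (rule sum.Int_Diff[OF H])
      also have "(\<Sum>t\<in>H \<inter> E. cmod (F j t - g t) powr p) \<le> (\<Sum>t\<in>E. cmod (F j t - g t) powr p)"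
        using E by (intro sum_mono2) auto
      also have "\<dots> \<le> e / 4" using N[OF j] by simp
      also have "(\<Sum>t\<in>H - E. cmod (F j t - g t) powr p)
          \<le> (\<Sum>t\<in>H - E. 2 powr p * (cmod (F j t) powr p + cmod (g t) powr p))"
        using norm_add_powr_le[of p "F j t" "- g t" for t] p by (intro sum_mono) auto
      also have "\<dots> = 2 powr p * ((\<Sum>t\<in>H - E. cmod (F j t) powr p) + (\<Sum>t\<in>H - E. cmod (g t) powr p))"
        by (simp add: sum.distrib sum_distrib_left distrib_left)
      also have "\<dots> \<le> 2 powr p * (e' + e')"
        using H E_tail by (intro mult_left_mono add_mono) auto
      also have "\<dots> = e / 2" using e'(2) by (simp add: distrib_left)
      finally show "(\<Sum>t\<in>H. cmod (F j t - g t) powr p) \<le> e / 4 + e / 2" by simp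
    qed
    show "\<exists>N. \<forall>j\<ge>N. norm (lp_mass p (\<lambda>t. F j t - g t) - 0) < e"
    proof (intro exI[of _ N] allI impI)
      fix j assume "N \<le> j"
      thus "norm (lp_mass p (\<lambda>t. F j t - g t) - 0) < e" using bound[of j] e by simp
    qed
  qed
  thus "(\<lambda>j. lp_norm p (\<lambda>t. F j t - g t)) \<longlonglongrightarrow> 0"
    unfolding lp_norm_eq using p by (intro tendsto_zero_powrI[OF _ tendsto_const]) auto
qed

definition weighted_comp2 ::
    "('a \<Rightarrow> complex) \<Rightarrow> ('a \<Rightarrow> 'b) \<Rightarrow> ('a \<Rightarrow> complex) \<Rightarrow> ('a \<Rightarrow> 'b) \<Rightarrow> ('b \<Rightarrow> complex) \<Rightarrow> 'a \<Rightarrow> complex" where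
  "weighted_comp2 c s c' s' y = (\<lambda>t. c t * y (s t) + c' t * y (s' t))"

lemma sum_weighted_comp_le:
  assumes p: "p \<ge> 0" and c: "\<And>t. cmod (c t) \<le> M" and inj: "inj_on s {t. c t \<noteq> 0}"
    and y: "y \<in> lp p" and F: "finite F"
  shows "(\<Sum>t\<in>F. cmod (c t * y (s t)) powr p) \<le> M powr p * lp_mass p y"
proof -
  have M: "M \<ge> 0" using c[of undefined] norm_ge_zero order_trans by blast
  have "(\<Sum>t\<in>F. cmod (c t * y (s t)) powr p) = (\<Sum>t\<in>F \<inter> {t. c t \<noteq> 0}. cmod (c t * y (s t)) powr p)"
    using F by (intro sum.mono_neutral_cong_right) auto
  also have "\<dots> \<le> (\<Sum>t\<in>F \<inter> {t. c t \<noteq> 0}. M powr p * cmod (y (s t)) powr p)"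
    using p c by (intro sum_mono) (auto simp: norm_mult powr_mult intro!: mult_right_mono powr_mono2)
  also have "\<dots> = M powr p * (\<Sum>i\<in>s ` (F \<inter> {t. c t \<noteq> 0}). cmod (y i) powr p)"
    by (simp add: sum_distrib_left sum.reindex inj_on_subset[OF inj])
  also have "\<dots> \<le> M powr p * lp_mass p y"
    using F y by (intro mult_left_mono sum_le_lp_mass) auto
  finally show ?thesis .
qed

lemma weighted_comp2_lp:
  assumes p: "p \<ge> 0" and c: "\<And>t. cmod (c t) \<le> M" "\<And>t. cmod (c' t) \<le> M"
    and inj: "inj_on s {t. c t \<noteq> 0}" "inj_on s' {t. c' t \<noteq> 0}" and y: "y \<in> lp p"
  shows "weighted_comp2 c s c' s' y \<in> lp p"
    "lp_mass p (weighted_comp2 c s c' s' y) \<le> 2 powr (p + 1) * M powr p * lp_mass p y"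
proof -
  have "(\<Sum>t\<in>F. cmod (weighted_comp2 c s c' s' y t) powr p) \<le> 2 powr (p + 1) * M powr p
      * lp_mass p y"
    if F: "finite F" for F
  proof -
    have "(\<Sum>t\<in>F. cmod (weighted_comp2 c s c' s' y t) powr p)
        \<le> (\<Sum>t\<in>F. 2 powr p * (cmod (c t * y (s t)) powr p + cmod (c' t * y (s' t)) powr p))"
      unfolding weighted_comp2_def using p by (intro sum_mono norm_add_powr_le)
    also have "\<dots> = 2 powr p
        * ((\<Sum>t\<in>F. cmod (c t * y (s t)) powr p) + (\<Sum>t\<in>F. cmod (c' t * y (s' t)) powr p))"
      by (simp add: sum.distrib sum_distrib_left distrib_left)
    also have "\<dots> \<le> 2 powr p * (M powr p * lp_mass p y + M powr p * lp_mass p y)"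
      by (intro mult_left_mono add_mono sum_weighted_comp_le assms F) auto
    finally show ?thesis by (simp add: powr_add algebra_simps)
  qed
  thus "weighted_comp2 c s c' s' y \<in> lp p"
    "lp_mass p (weighted_comp2 c s c' s' y) \<le> 2 powr (p + 1) * M powr p * lp_mass p y"
    by (blast intro: lp_memberI)+
qed

lemma lp_norm_weighted_comp2_le:
  assumes p: "1 \<le> p" and c: "\<And>t. cmod (c t) \<le> M" "\<And>t. cmod (c' t) \<le> M"
    and inj: "inj_on s {t. c t \<noteq> 0}" "inj_on s' {t. c' t \<noteq> 0}" and y: "y \<in> lp p"
  shows "lp_norm p (weighted_comp2 c s c' s' y) \<le> 4 * M * lp_norm p y"
proof -
  have M: "M \<ge> 0" using c(1)[of undefined] norm_ge_zero order_trans by blast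
  have "lp_norm p (weighted_comp2 c s c' s' y)
      \<le> (2 powr (p + 1) * M powr p * lp_mass p y) powr (1 / p)"
    unfolding lp_norm_eq using p weighted_comp2_lp(2)[OF _ assms(2-)]
    by (intro powr_mono2 lp_mass_nonneg) auto
  also have "\<dots> = 2 powr ((p + 1) / p) * M * lp_norm p y"
    using p M lp_mass_nonneg[of p y] by (simp add: powr_mult powr_powr lp_norm_eq)
  also have "2 powr ((p + 1) / p) \<le> 2 powr 2" using p by (intro powr_mono) (auto simp: field_simps)
  hence "2 powr ((p + 1) / p) * M * lp_norm p y \<le> 4 * M * lp_norm p y"
    using M lp_norm_nonneg by (intro mult_right_mono) auto
  finally show ?thesis .
qed

lemma bounded_op_weighted_comp2:
  assumes p: "1 \<le> p" and c: "\<And>t. cmod (c t) \<le> M" "\<And>t. cmod (c' t) \<le> M"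
    and inj: "inj_on s {t. c t \<noteq> 0}" "inj_on s' {t. c' t \<noteq> 0}"
  shows "bounded_op p (weighted_comp2 c s c' s')" "op_norm p (weighted_comp2 c s c' s') \<le> 4 * M"
    "0 \<le> op_norm p (weighted_comp2 c s c' s')"
proof -
  have M: "M \<ge> 0" using c(1)[of undefined] norm_ge_zero order_trans by blast
  show "bounded_op p (weighted_comp2 c s c' s')" unfolding bounded_op_def
    using weighted_comp2_lp(1)[OF _ assms(2-)] lp_norm_weighted_comp2_le[OF assms] p
    by (intro conjI ballI allI exI[of _ "4 * M"]) (auto simp: weighted_comp2_def algebra_simps)
  show "op_norm p (weighted_comp2 c s c' s') \<le> 4 * M" "0 \<le> op_norm p (weighted_comp2 c s c' s')"
    using op_norm_le[OF lp_norm_weighted_comp2_le[OF assms]] M by auto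
qed

text \<open>On the unit ball, the image has $l^p$-mass at most $2^{p+1} d^p$ outside the finite set
  $\{t.\ d \le |c\,t| \lor d \le |c'\,t|\}$.\<close>

lemma compact_op_weighted_comp2:
  fixes c c' :: "'a::countable \<Rightarrow> complex" and s s' :: "'a \<Rightarrow> 'b"
  assumes p: "1 \<le> p" and c: "\<And>t. cmod (c t) \<le> M" "\<And>t. cmod (c' t) \<le> M"
    and inj: "inj_on s {t. c t \<noteq> 0}" "inj_on s' {t. c' t \<noteq> 0}"
    and vanish: "\<And>d. d > 0 \<Longrightarrow> finite {t. d \<le> cmod (c t) \<or> d \<le> cmod (c' t)}"
  shows "compact_op p (weighted_comp2 c s c' s')"
  unfolding compact_op_def
proof (intro conjI allI impI)
  show "bounded_op p (weighted_comp2 c s c' s')" by (rule bounded_op_weighted_comp2[OF assms(1-5)])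
  fix x :: "nat \<Rightarrow> 'b \<Rightarrow> complex" assume x: "\<forall>k. x k \<in> lp p \<and> lp_norm p (x k) \<le> 1"
  have p0: "p > 0" using p by simp
  have mass: "lp_mass p (x k) \<le> 1" for k
  proof -
    have "lp_norm p (x k) powr p \<le> 1 powr p" using x p0 lp_norm_nonneg by (intro powr_mono2) auto
    thus ?thesis using p0 by (simp add: lp_norm_powr)
  qed
  define F where "F k = weighted_comp2 c s c' s' (x k)" for k
  have M: "M \<ge> 0" using c(1)[of undefined] norm_ge_zero order_trans by blast
  have x_le_1: "cmod (x k i) \<le> 1" for k i
  proof -
    have "cmod (x k i) \<le> lp_norm p (x k)" using x by (intro norm_le_lp_norm p0) auto
    also have "\<dots> \<le> 1" using x by auto
    finally show ?thesis .
  qed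
  have "cmod (F k t) \<le> M * 1 + M * 1" for k t
  proof -
    have "cmod (F k t) \<le> cmod (c t) * cmod (x k (s t)) + cmod (c' t) * cmod (x k (s' t))"
      unfolding F_def weighted_comp2_def by (metis norm_mult norm_triangle_ineq)
    also have "\<dots> \<le> M * 1 + M * 1"
      using c x_le_1 M by (intro add_mono mult_mono) auto
    finally show ?thesis .
  qed
  then obtain r where r: "strict_mono r" "\<And>t. convergent (\<lambda>j. F (r j) t)"
    using bounded_seq_pointwise_convergent_subseq[of F] by blast
  define g where "g t = lim (\<lambda>j. F (r j) t)" for t
  have tails: "\<exists>E. finite E \<and> (\<forall>j H. finite H \<longrightarrow> H \<inter> E = {} \<longrightarrow> (\<Sum>t\<in>H. cmod (F (r j) t) powr p) \<le> e)"
    if e: "e > 0" for e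
  proof -
    define d where "d = (e / 2 powr (p + 1)) powr (1 / p)"
    have d: "d > 0" "2 powr (p + 1) * d powr p = e" using e p0 by (simp_all add: d_def powr_powr)
    define E where "E = {t. d \<le> cmod (c t) \<or> d \<le> cmod (c' t)}"
    have "(\<Sum>t\<in>H. cmod (F k t) powr p) \<le> e" if H: "finite H" "H \<inter> E = {}" for k H
    proof -
      define cut where "cut b t = (if t \<in> E then 0 else b t)" for b :: "'a \<Rightarrow> complex" and t
      have "(\<Sum>t\<in>H. cmod (F k t) powr p)
          = (\<Sum>t\<in>H. cmod (weighted_comp2 (cut c) s (cut c') s' (x k) t) powr p)"
        using H by (intro sum.cong) (auto simp: F_def weighted_comp2_def cut_def)
      also have "\<dots> \<le> lp_mass p (weighted_comp2 (cut c) s (cut c') s' (x k))"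
        using H x p0 d(1)
          by (intro sum_le_lp_mass weighted_comp2_lp(1)[where M = d] inj_on_subset[OF inj(1)]
            inj_on_subset[OF inj(2)]) (auto simp: cut_def E_def)
      also have "\<dots> \<le> 2 powr (p + 1) * d powr p * lp_mass p (x k)"
        using x p0 d(1)
          by (intro weighted_comp2_lp(2) inj_on_subset[OF inj(1)] inj_on_subset[OF inj(2)])
          (auto simp: cut_def E_def)
      also have "\<dots> \<le> 2 powr (p + 1) * d powr p * 1"
        using mass[of k] d(1) by (intro mult_left_mono) auto
      also have "\<dots> = e" using d(2) by simp
      finally show ?thesis .
    qed
    thus ?thesis using vanish[OF d(1)] unfolding E_def by blast
  qed
  have "g \<in> lp p" "(\<lambda>j. lp_norm p (\<lambda>t. F (r j) t - g t)) \<longlonglongrightarrow> 0"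
    using lp_tendsto_of_pointwise_uniform_tails[OF p0 _ tails] r(2)
    by (auto simp: g_def convergent_LIMSEQ_iff)
  thus "\<exists>r y. strict_mono r \<and> y \<in> lp p \<and>
      (\<lambda>k. lp_norm p (\<lambda>j. weighted_comp2 c s c' s' (x (r k)) j - y j)) \<longlonglongrightarrow> 0"
    using r(1) unfolding F_def by blast
qed
section \<open>Blocks and chains\<close>

text \<open>The positions $1, 2, \ldots$ are cut into consecutive blocks $t = 0, 1, \ldots$, each consisting
  of four quarters $q = 0, 1, 2, 3$ (called R, A, B, C in lemma names) of length $L + t + 1$. Block
  \<open>enc k m = prod_encode (k, m)\<close> is the $m$-th block of the $k$-th bilateral summand; quarter R of
  every block belongs to the unilateral summand.\<close>

definition blk_len :: "nat \<Rightarrow> nat \<Rightarrow> nat" where "blk_len L t = Suc (L + t)"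
definition blk_start :: "nat \<Rightarrow> nat \<Rightarrow> nat" where "blk_start L t = (\<Sum>s<t. 4 * blk_len L s)"
definition blk_pos :: "nat \<Rightarrow> nat \<Rightarrow> nat \<Rightarrow> nat \<Rightarrow> nat" where
  "blk_pos L t q j = Suc (blk_start L t + q * blk_len L t + j)"

lemma blk_start_Suc: "blk_start L (Suc t) = blk_start L t + 4 * blk_len L t"
  by (simp add: blk_start_def)

lemma divmod_unique:
  fixes l :: nat
  assumes "o1 < l" "o2 < l" "q1 * l + o1 = q2 * l + o2"
  shows "q1 = q2 \<and> o1 = o2"
proof -
  have l: "l \<noteq> 0" using assms by auto
  have e1: "(o1 + q1 * l) div l = q1" using assms div_mult_self1[OF l, of o1 q1] by simp
  have e2: "(o2 + q2 * l) div l = q2" using assms div_mult_self1[OF l, of o2 q2] by simp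
  have "o1 + q1 * l = o2 + q2 * l" using assms(3) by simp
  hence "q1 = q2" using e1 e2 by metis
  with assms show ?thesis by auto
qed

lemma blk_start_mono: "t \<le> t' \<Longrightarrow> blk_start L t \<le> blk_start L t'"
  unfolding blk_start_def by (rule sum_mono2) auto

lemma mult_add_less_mult:
  fixes q j l n :: nat
  assumes "q < n" "j < l"
  shows "q * l + j < n * l"
proof -
  have "q * l + j < Suc q * l" using assms(2) by simp
  also have "\<dots> \<le> n * l" using assms(1) by (intro mult_right_mono) auto
  finally show ?thesis .
qed

lemma blk_pos_less_next_block: "q < 4 \<Longrightarrow> j < blk_len L t \<Longrightarrow> blk_pos L t q j < blk_pos L (Suc t) 0 0"
  using mult_add_less_mult[of q 4 j "blk_len L t"] by (simp add: blk_pos_def blk_start_Suc)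

lemma blk_pos_block_mono: "t \<le> t' \<Longrightarrow> blk_pos L t 0 0 \<le> blk_pos L t' q j"
  using blk_start_mono[of t t' L] by (simp add: blk_pos_def)

lemma blk_pos_inj:
  assumes "q < 4" "j < blk_len L t" "q' < 4" "j' < blk_len L t'" "blk_pos L t q j
      = blk_pos L t' q' j'"
  shows "t = t' \<and> q = q' \<and> j = j'"
proof -
  have "t = t'"
  proof (rule ccontr)
    assume "t \<noteq> t'"
    hence "blk_pos L t q j < blk_pos L t' q' j' \<or> blk_pos L t' q' j' < blk_pos L t q j"
      using blk_pos_less_next_block[OF assms(1,2)] blk_pos_less_next_block[OF assms(3,4)]
        blk_pos_block_mono[of "Suc t" t' L q' j'] blk_pos_block_mono[of "Suc t'" t L q j]
          by linarith
    thus False using assms(5) by simp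
  qed
  thus ?thesis using assms divmod_unique[of j "blk_len L t" j' q q'] by (simp add: blk_pos_def)
qed

lemma blk_start_ge: "t \<le> blk_start L t"
proof (induction t)
  case (Suc t) thus ?case by (simp add: blk_start_Suc blk_len_def)
qed simp

lemma blk_pos_exists:
  assumes "i \<ge> 1"
  shows "\<exists>t q j. q < 4 \<and> j < blk_len L t \<and> i = blk_pos L t q j"
proof -
  define u where "u = i - 1"
  have ex: "\<exists>t. u < blk_start L (Suc t)"
    using blk_start_ge[of "Suc u" L] by (intro exI[of _ u]) simp
  define t where "t = (LEAST t. u < blk_start L (Suc t))"
  have t1: "u < blk_start L (Suc t)" unfolding t_def by (rule LeastI_ex[OF ex])
  have t0: "blk_start L t \<le> u"
  proof (cases t)
    case 0 thus ?thesis by (simp add: blk_start_def)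
  next
    case (Suc t')
    have "\<not> u < blk_start L (Suc t')"
      using not_less_Least[of t' "\<lambda>t. u < blk_start L (Suc t)"] Suc t_def by auto
    thus ?thesis using Suc by simp
  qed
  define v where "v = u - blk_start L t"
  have lpos: "blk_len L t > 0" using assms by (simp add: blk_len_def)
  have v4: "v < 4 * blk_len L t" using t0 t1 by (simp add: v_def blk_start_Suc)
  define q where "q = v div blk_len L t"
  define j where "j = v mod blk_len L t"
  have "q < 4" using v4 lpos by (simp add: q_def less_mult_imp_div_less)
  moreover have "j < blk_len L t" using lpos by (simp add: j_def)
  moreover have "i = blk_pos L t q j"
  proof -
    have "v div blk_len L t * blk_len L t + v mod blk_len L t = v" by (rule div_mult_mod_eq)
    thus ?thesis using assms t0 by (simp add: blk_pos_def q_def j_def u_def v_def add.assoc)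
  qed
  ultimately show ?thesis by blast
qed

definition blk_coords :: "nat \<Rightarrow> nat \<Rightarrow> nat \<times> nat \<times> nat" where
  "blk_coords L i = (THE (t, q, j). q < 4 \<and> j < blk_len L t \<and> i = blk_pos L t q j)"

lemma blk_coords_blk_pos:
  assumes "q < 4" "j < blk_len L t"
  shows "blk_coords L (blk_pos L t q j) = (t, q, j)"
  unfolding blk_coords_def
proof (rule the_equality)
  show "case (t, q, j) of (t', q', j') \<Rightarrow> q' < 4 \<and> j' < blk_len L t' \<and> blk_pos L t q j
      = blk_pos L t' q' j'"
    using assms by simp
  fix x assume "case x of (t', q', j') \<Rightarrow> q' < 4 \<and> j' < blk_len L t' \<and> blk_pos L t q j
      = blk_pos L t' q' j'"
  thus "x = (t, q, j)" using blk_pos_inj[OF assms] by (cases x) auto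
qed

abbreviation enc :: "nat \<Rightarrow> nat \<Rightarrow> nat" where "enc k m \<equiv> prod_encode (k, m)"

lemma enc_Suc: "enc k (Suc m) = enc k m + Suc (k + m)"
  by (simp add: prod_encode_def)

lemma enc_less: "enc k m < enc k (Suc m)" by (simp add: enc_Suc)

lemma triangle_ge: "n \<le> triangle n"
  by (induction n) auto

lemma enc_Suc_le: "enc k (Suc m) \<le> 2 * enc k m + 1"
  using triangle_ge[of "k+m"] by (simp add: prod_encode_def)

lemma enc_surj: "\<exists>k m. t = enc k m"
  by (metis prod_decode_inverse surj_pair)

text \<open>\<open>link L i = Some (w, s, j)\<close>: position $i$ is the $s$-th of the $w$ links of a chain and is
  paired with $j$. Quarters R and C of a block are paired position by position; quarter A of block
  \<open>enc k m\<close> is paired with the final segment of the same length of quarter B of block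
  \<open>enc k (m + 1)\<close>. Every chain has length $w > L$.\<close>

definition link :: "nat \<Rightarrow> nat \<Rightarrow> (nat \<times> nat \<times> nat) option" where
  "link L i = (if i = 0 then None else (case blk_coords L i of (t, q, j) \<Rightarrow>
     (case prod_decode t of (k, m) \<Rightarrow>
       if q = 0 then Some (blk_len L t, Suc j, blk_pos L t 3 j)
       else if q = 3 then Some (blk_len L t, Suc j, blk_pos L t 0 j)
       else if q = 1 then Some (blk_len L t, Suc j, blk_pos L (enc k (Suc m)) 2 (enc k (Suc m) - t + j))
       else if m = 0 then None
       else if t - enc k (m - 1) \<le> j then
         Some (blk_len L (enc k (m - 1)), Suc (j - (t - enc k (m - 1))), blk_pos L (enc k (m - 1)) 1 (j - (t - enc k (m - 1))))
       else None)))"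

lemma blk_pos_nz [simp]: "blk_pos L t q j \<noteq> 0" by (simp add: blk_pos_def)
lemma blk_pos_ge [simp]: "Suc 0 \<le> blk_pos L t q j" by (simp add: blk_pos_def)

lemma link_R: "j < blk_len L t \<Longrightarrow> link L (blk_pos L t 0 j)
    = Some (blk_len L t, Suc j, blk_pos L t 3 j)"
  by (simp add: link_def blk_coords_blk_pos split: prod.split)

lemma link_C: "j < blk_len L t \<Longrightarrow> link L (blk_pos L t 3 j)
    = Some (blk_len L t, Suc j, blk_pos L t 0 j)"
  by (simp add: link_def blk_coords_blk_pos split: prod.split)

lemma link_A: "j < blk_len L (enc k m) \<Longrightarrow>
   link L (blk_pos L (enc k m) 1 j) = Some (blk_len L (enc k m), Suc j, blk_pos L (enc k (Suc m)) 2 (enc k (Suc m) - enc k m + j))"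
  by (simp add: link_def blk_coords_blk_pos)

lemma link_B0: "j < blk_len L (enc k 0) \<Longrightarrow> link L (blk_pos L (enc k 0) 2 j) = None"
  by (simp add: link_def blk_coords_blk_pos)

lemma link_B: "j < blk_len L (enc k (Suc m)) \<Longrightarrow>
   link L (blk_pos L (enc k (Suc m)) 2 j) = (if enc k (Suc m) - enc k m \<le> j then
      Some (blk_len L (enc k m), Suc (j - (enc k (Suc m) - enc k m)), blk_pos L (enc k m) 1 (j - (enc k (Suc m) - enc k m)))
    else None)"
  by (simp add: link_def blk_coords_blk_pos del: prod_encode_eq)

lemma link_0 [simp]: "link L 0 = None" by (simp add: link_def)

lemma blk_pos_cases:
  assumes "i \<ge> 1"
  obtains k m q j where "q < 4" "j < blk_len L (enc k m)" "i = blk_pos L (enc k m) q j"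
  using blk_pos_exists[OF assms, of L] enc_surj by metis

definition chain_end :: "nat \<Rightarrow> nat \<Rightarrow> bool" where
  "chain_end L i \<longleftrightarrow> link L i = None \<or> (\<exists>w j. link L i = Some (w, w, j))"

lemma blk_len_pos: "blk_len L t > 0" by (simp add: blk_len_def)

lemma blk_pos_pred_inside: "j \<ge> 1 \<Longrightarrow> blk_pos L t q j - 1 = blk_pos L t q (j - 1)"
  by (simp add: blk_pos_def)

lemma blk_pos_pred_quarter: "q \<ge> 1 \<Longrightarrow> blk_pos L t q 0 - 1 = blk_pos L t (q - 1) (blk_len L t - 1)"
  by (cases q) (auto simp: blk_pos_def blk_len_def algebra_simps)

lemma blk_pos_pred_block: "blk_pos L (Suc t) 0 0 - 1 = blk_pos L t 3 (blk_len L t - 1)"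
  by (simp add: blk_pos_def blk_start_Suc blk_len_def)

lemma blk_pos_first: "blk_pos L 0 0 0 = 1" by (simp add: blk_pos_def blk_start_def)

lemma chain_end_quarter_last:
  assumes "q < 4"
  shows "chain_end L (blk_pos L t q (blk_len L t - 1))"
proof -
  have lt: "blk_len L t - 1 < blk_len L t" using blk_len_pos[of L t] by simp
  have "q = 0 \<or> q = 1 \<or> q = 2 \<or> q = 3" using assms by auto
  moreover
  { assume "q = 0" hence ?thesis
    using link_R[OF lt] blk_len_pos[of L t] by (simp add: chain_end_def) }
  moreover
  { assume "q = 3" hence ?thesis
    using link_C[OF lt] blk_len_pos[of L t] by (simp add: chain_end_def) }
  moreover
  { assume q1: "q = 1"
    obtain k m where t: "t = enc k m" using enc_surj by blast
    have ?thesis using q1 link_A[of "blk_len L t - 1" L k m] lt blk_len_pos[of L t] t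
      by (simp add: chain_end_def) }
  moreover
  { assume q2: "q = 2"
    obtain k m where t: "t = enc k m" using enc_surj by blast
    have ?thesis
    proof (cases m)
      case 0 thus ?thesis
        using q2 t link_B0[of "blk_len L t - 1" L k] lt by (simp add: chain_end_def)
    next
      case (Suc m')
      have d: "enc k (Suc m') - enc k m' \<le> blk_len L t - 1" using t Suc by (simp add: blk_len_def)
      have e: "Suc (blk_len L t - 1 - (enc k (Suc m') - enc k m')) = blk_len L (enc k m')"
        using t Suc enc_less[of k m'] by (simp add: blk_len_def)
      show ?thesis using q2 t Suc link_B[of "blk_len L t - 1" L k m'] lt d e
        by (simp add: chain_end_def)
    qed }
  ultimately show ?thesis by blast
qed

lemma chain_end_before_quarter:
  assumes "q < 4"
  shows "chain_end L (blk_pos L t q 0 - 1)"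
proof (cases "q \<ge> 1")
  case True thus ?thesis
    using blk_pos_pred_quarter[OF True] chain_end_quarter_last[of "q - 1"] assms by simp
next
  case False
  hence q: "q = 0" by simp
  show ?thesis
  proof (cases t)
    case 0 thus ?thesis using q blk_pos_first[of L] by (simp add: chain_end_def)
  next
    case (Suc t') thus ?thesis
      using q blk_pos_pred_block[of L t'] chain_end_quarter_last[of 3] by simp
  qed
qed

lemma link_sym:
  assumes "link L i = Some (w, s, j)"
  shows "link L j = Some (w, s, i) \<and> 1 \<le> s \<and> s \<le> w \<and> L < w \<and> j \<ge> 1"
proof -
  have "i \<ge> 1" using assms by (cases i) auto
  then obtain k m q jj where q: "q < 4" and jj: "jj < blk_len L (enc k m)" and i: "i
      = blk_pos L (enc k m) q jj"
    by (rule blk_pos_cases)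
  have "q = 0 \<or> q = 1 \<or> q = 2 \<or> q = 3" using q by auto
  moreover
  { assume "q = 0" hence ?thesis
    using assms i jj link_C[OF jj] link_R[OF jj] by (auto simp: blk_len_def) }
  moreover
  { assume "q = 3" hence ?thesis
    using assms i jj link_C[OF jj] link_R[OF jj] by (auto simp: blk_len_def) }
  moreover
  { assume q1: "q = 1"
    have lt: "enc k (Suc m) - enc k m + jj < blk_len L (enc k (Suc m))"
      using jj enc_less[of k m] by (simp add: blk_len_def)
    have ?thesis using assms i q1 link_A[OF jj] link_B[OF lt] jj enc_less[of k m]
      by (auto simp: blk_len_def) }
  moreover
  { assume q2: "q = 2"
    have ?thesis
    proof (cases m)
      case 0 thus ?thesis using assms i q2 link_B0 jj by simp
    next
      case (Suc m')
      define d where "d = enc k (Suc m') - enc k m'"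
      have dj: "d \<le> jj" using assms i q2 Suc link_B jj by (fastforce simp: d_def split: if_splits)
      have lt: "jj - d < blk_len L (enc k m')"
        using jj Suc enc_less[of k m'] by (simp add: blk_len_def d_def)
      have e: "d + (jj - d) = jj" using dj by simp
      show ?thesis using assms i q2 Suc link_B[of jj L k m'] jj dj link_A[OF lt] e lt
        by (auto simp: d_def blk_len_def)
    qed }
  ultimately show ?thesis by blast
qed

definition link_step_cases :: "nat \<Rightarrow> nat \<Rightarrow> bool" where
  "link_step_cases L i \<longleftrightarrow>
     (link L i = None \<and> chain_end L (i - 1))
   \<or> (\<exists>w j. link L i = Some (w, 1, j) \<and> chain_end L (i - 1) \<and> chain_end L (j - 1))
   \<or> (\<exists>w s j. s \<ge> 2 \<and> link L i = Some (w, s, j) \<and> link L (i - 1) = Some (w, s - 1, j - 1))"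

lemma link_step_quarter_start:
  assumes q: "q < 4"
  shows "link_step_cases L (blk_pos L (enc k m) q 0)"
proof -
  have j: "0 < blk_len L (enc k m)" by (rule blk_len_pos)
  have prev: "chain_end L (blk_pos L (enc k m) q 0 - 1)" by (rule chain_end_before_quarter[OF q])
  consider "q = 0" | "q = 1" | "q = 2" | "q = 3" using q by linarith
  thus ?thesis
  proof cases
    case 1 thus ?thesis using prev link_R[OF j] chain_end_before_quarter[of 3 L "enc k m"]
      by (simp add: link_step_cases_def)
  next
    case 2
    define d where "d = enc k (Suc m) - enc k m"
    have d1: "d \<ge> 1" using enc_less[of k m] by (simp add: d_def)
    have lt: "d - 1 < blk_len L (enc k (Suc m))"
      using enc_less[of k m] by (simp add: d_def blk_len_def)
    have "link L (blk_pos L (enc k (Suc m)) 2 (d - 1)) = None"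
      using link_B[OF lt] d1 by (simp add: d_def)
    hence "chain_end L (blk_pos L (enc k (Suc m)) 2 d - 1)"
      using blk_pos_pred_inside[OF d1] by (simp add: chain_end_def)
    thus ?thesis using prev 2 link_A[OF j] by (simp add: d_def link_step_cases_def)
  next
    case 3
    have "link L (blk_pos L (enc k m) q 0) = None"
    proof (cases m)
      case 0 thus ?thesis using 3 link_B0 j by simp
    next
      case (Suc m') thus ?thesis using 3 link_B[of 0 L k m'] enc_less[of k m'] j by simp
    qed
    thus ?thesis using prev by (simp add: link_step_cases_def)
  next
    case 4 thus ?thesis using prev link_C[OF j] chain_end_before_quarter[of 0 L "enc k m"]
      by (simp add: link_step_cases_def)
  qed
qed

lemma link_step_quarter_B_inside:
  assumes j1: "1 \<le> j" and j: "j < blk_len L (enc k m)"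
  shows "link_step_cases L (blk_pos L (enc k m) 2 j)"
proof -
  have jl: "j - 1 < blk_len L (enc k m)" using j by simp
  have prev_pos: "blk_pos L (enc k m) 2 j - 1 = blk_pos L (enc k m) 2 (j - 1)"
    by (rule blk_pos_pred_inside[OF j1])
  show ?thesis
  proof (cases m)
    case 0 thus ?thesis using link_B0 j jl prev_pos by (simp add: link_step_cases_def chain_end_def)
  next
    case (Suc m')
    define d where "d = enc k (Suc m') - enc k m'"
    have cur: "link L (blk_pos L (enc k m) 2 j) = (if d \<le> j then
        Some (blk_len L (enc k m'), Suc (j - d), blk_pos L (enc k m') 1 (j - d)) else None)"
      using Suc link_B[of j L k m'] j by (simp add: d_def)
    have prev: "link L (blk_pos L (enc k m) 2 j - 1) = (if d \<le> j - 1 then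
        Some (blk_len L (enc k m'), Suc (j - 1 - d), blk_pos L (enc k m') 1 (j - 1 - d)) else None)"
      using Suc link_B[of "j - 1" L k m'] jl blk_pos_pred_inside[OF j1] by (simp add: d_def)
    consider "j < d" | "j = d" | "j > d" by linarith
    thus ?thesis
    proof cases
      case 1
      hence "\<not> d \<le> j - 1" by simp
      thus ?thesis using cur prev 1 by (simp add: link_step_cases_def chain_end_def)
    next
      case 2
      have "chain_end L (blk_pos L (enc k m') 1 0 - 1)"
        using blk_pos_pred_quarter[of 1 L "enc k m'"] chain_end_quarter_last[of 0] by simp
      moreover have "\<not> d \<le> d - 1" using 2 j1 by simp
      ultimately show ?thesis using cur prev 2 by (simp add: link_step_cases_def chain_end_def)
    next
      case 3
      have "blk_pos L (enc k m') 1 (j - d) - 1 = blk_pos L (enc k m') 1 (j - 1 - d)"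
        using 3 by (simp add: blk_pos_def)
      moreover have "Suc (j - 1 - d) = Suc (j - d) - 1" using 3 by simp
      ultimately show ?thesis using cur prev 3 by (auto simp: link_step_cases_def)
  qed
  qed
qed

lemma link_step_inside:
  assumes q: "q < 4" and j1: "1 \<le> j" and j: "j < blk_len L (enc k m)"
  shows "link_step_cases L (blk_pos L (enc k m) q j)"
proof -
  have prev: "blk_pos L (enc k m) q j - 1 = blk_pos L (enc k m) q (j - 1)"
    by (rule blk_pos_pred_inside[OF j1])
  have jl: "j - 1 < blk_len L (enc k m)" using j by simp
  consider "q = 0" | "q = 1" | "q = 2" | "q = 3" using q by linarith
  thus ?thesis
  proof cases
    case 1 thus ?thesis using prev link_R[OF j] link_R[OF jl] blk_pos_pred_inside[OF j1] j1
      by (simp add: link_step_cases_def)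
  next
    case 2
    have "blk_pos L (enc k (Suc m)) 2 (enc k (Suc m) - enc k m + j) - 1
        = blk_pos L (enc k (Suc m)) 2 (enc k (Suc m) - enc k m + (j - 1))"
      using j1 by (simp add: blk_pos_def)
    thus ?thesis using prev 2 link_A[OF j] link_A[OF jl] j1 by (simp add: link_step_cases_def)
  next
    case 3 thus ?thesis using link_step_quarter_B_inside[OF j1 j] by simp
  next
    case 4 thus ?thesis using prev link_C[OF j] link_C[OF jl] blk_pos_pred_inside[OF j1] j1
      by (simp add: link_step_cases_def)
  qed
qed

lemma link_step:
  assumes "i \<ge> 1"
  shows "link_step_cases L i"
proof -
  obtain k m q j where q: "q < 4" and j: "j < blk_len L (enc k m)" and i: "i
      = blk_pos L (enc k m) q j"
    using blk_pos_cases[OF assms] by blast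
  show ?thesis
  proof (cases "j = 0")
    case True thus ?thesis using link_step_quarter_start[OF q] i by simp
  next
    case False thus ?thesis using link_step_inside[OF q _ j] i by simp
  qed
qed

section \<open>Rotations along the chains\<close>

text \<open>The similarity acts on every linked pair $\{i, \mathit{partner}\ i\}$ by the matrix
  with entries $(1 \pm z)/2$, which fixes $(1, 1)$ and multiplies $(1, -1)$ by $z$; hence these
  matrices multiply like their parameters $z$ (\<open>hplus_hminus_mult\<close>). The $s$-th link of a chain
  of length $w$ gets $z = e^{i \pi s / w}$, so the last link is the transposition.\<close>

definition phase :: "nat \<Rightarrow> nat \<Rightarrow> complex" where
  "phase L i = (case link L i of None \<Rightarrow> 1 | Some (w, s, j) \<Rightarrow> cis (pi * real s / real w))"
definition partner :: "nat \<Rightarrow> nat \<Rightarrow> nat" where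
  "partner L i = (case link L i of None \<Rightarrow> i | Some (w, s, j) \<Rightarrow> j)"
definition swap :: "nat \<Rightarrow> nat \<Rightarrow> nat" where
  "swap L i = (case link L i of None \<Rightarrow> i | Some (w, s, j) \<Rightarrow> if s = w then j else i)"
definition defect :: "nat \<Rightarrow> nat \<Rightarrow> complex" where
  "defect L i = (case link L i of None \<Rightarrow> 0 | Some (w, s, j) \<Rightarrow> (1 - cis (pi / real w)) / 2)"
definition hplus :: "complex \<Rightarrow> complex" where "hplus z = (1 + z) / 2"
definition hminus :: "complex \<Rightarrow> complex" where "hminus z = (1 - z) / 2"

definition rot :: "nat \<Rightarrow> (nat \<Rightarrow> complex) \<Rightarrow> nat \<Rightarrow> complex" where
  "rot L x i = hplus (phase L i) * x i + hminus (phase L i) * x (partner L i)"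
definition rot_inv :: "nat \<Rightarrow> (nat \<Rightarrow> complex) \<Rightarrow> nat \<Rightarrow> complex" where
  "rot_inv L x i = hplus (cnj (phase L i)) * x i + hminus (cnj (phase L i)) * x (partner L i)"

lemma partner_partner [simp]: "partner L (partner L i) = i"
  by (cases "link L i") (auto simp: partner_def dest: link_sym)

lemma phase_partner [simp]: "phase L (partner L i) = phase L i"
  by (cases "link L i") (auto simp: partner_def phase_def dest: link_sym)

lemma norm_phase [simp]: "cmod (phase L i) = 1"
  by (cases "link L i") (auto simp: phase_def)

lemma cnj_phase: "cnj (phase L i) * phase L i = 1"
proof -
  have "phase L i * cnj (phase L i) = complex_of_real ((cmod (phase L i))\<^sup>2)"
    by (rule complex_norm_square[symmetric])
  thus ?thesis by (simp add: mult.commute)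
qed

lemma phase_cnj: "phase L i * cnj (phase L i) = 1"
  using cnj_phase[of L i] by (simp add: mult.commute)

lemma partner_0 [simp]: "partner L 0 = 0" by (simp add: partner_def)
lemma phase_0 [simp]: "phase L 0 = 1" by (simp add: phase_def)
lemma defect_0 [simp]: "defect L 0 = 0" by (simp add: defect_def)

lemma partner_ge1: "i \<ge> 1 \<Longrightarrow> partner L i \<ge> 1"
  by (cases "link L i") (auto simp: partner_def dest: link_sym)

lemma hplus_hminus_mult: "hplus z * (hplus u * X + hminus u * Y) + hminus z
    * (hplus u * Y + hminus u * X) = hplus (z * u) * X + hminus (z * u) * Y"
  by (simp add: hplus_def hminus_def field_simps)

lemma hplus_hminus_eq: "hplus z * X + hminus z * Y = X - hminus z * (X - Y)"
  by (simp add: hplus_def hminus_def field_simps)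

lemma hplus_1 [simp]: "hplus 1 = 1" and hminus_1 [simp]: "hminus 1 = 0"
  by (simp_all add: hplus_def hminus_def)

lemma rot_inv_rot: "rot_inv L (rot L x) = x"
proof
  fix i
  have "rot_inv L (rot L x) i = hplus (cnj (phase L i) * phase L i) * x i
      + hminus (cnj (phase L i) * phase L i) * x (partner L i)"
    unfolding rot_inv_def rot_def by (simp add: hplus_hminus_mult)
  thus "rot_inv L (rot L x) i = x i" by (simp add: cnj_phase)
qed

lemma rot_rot_inv: "rot L (rot_inv L x) = x"
proof
  fix i
  have "rot L (rot_inv L x) i = hplus (phase L i * cnj (phase L i)) * x i
      + hminus (phase L i * cnj (phase L i)) * x (partner L i)"
    unfolding rot_inv_def rot_def by (simp add: hplus_hminus_mult)
  thus "rot L (rot_inv L x) i = x i" by (simp add: phase_cnj)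
qed

lemma chain_end_rot_inv:
  assumes "chain_end L j"
  shows "rot_inv L x j = x (swap L j)"
  using assms
proof (cases "link L j")
  case None thus ?thesis by (simp add: rot_inv_def phase_def partner_def swap_def)
next
  case (Some a)
  then obtain w j' where a: "link L j = Some (w, w, j')" using assms by (auto simp: chain_end_def)
  have "w \<ge> 1" using link_sym[OF a] by simp
  hence "phase L j = -1" using a by (simp add: phase_def)
  thus ?thesis using a by (simp add: rot_inv_def hplus_def hminus_def partner_def swap_def)
qed

lemma rot_shift_rot_inv:
  assumes i: "i \<ge> 1"
  shows "rot L (ushift (rot_inv L x)) i = x (swap L (i - 1)) - defect L i
      * (x (swap L (i - 1)) - x (swap L (partner L i - 1)))"
proof -
  have pi1: "partner L i \<ge> 1" by (rule partner_ge1[OF i])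
  have base: "rot L (ushift (rot_inv L x)) i = hplus (phase L i) * rot_inv L x (i - 1)
      + hminus (phase L i) * rot_inv L x (partner L i - 1)"
    using i pi1 by (simp add: rot_def ushift_def)
  from link_step[OF i, of L, unfolded link_step_cases_def] consider
      (reg) "link L i = None" "chain_end L (i - 1)"
    | (one) w j where "link L i = Some (w, 1, j)" "chain_end L (i - 1)" "chain_end L (j - 1)"
    | (mid) w s j where "s \<ge> 2" "link L i = Some (w, s, j)" "link L (i - 1)
        = Some (w, s - 1, j - 1)"
    by (elim disjE exE conjE) auto
  thus ?thesis
  proof cases
    case reg
    thus ?thesis using base chain_end_rot_inv[OF reg(2)]
      by (simp add: phase_def partner_def defect_def)
  next
    case one
    have e: "phase L i = cis (pi / real w)" "partner L i = j" "defect L i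
        = hminus (cis (pi / real w))"
      using one by (simp_all add: phase_def partner_def defect_def hminus_def)
    have "rot L (ushift (rot_inv L x)) i = hplus (cis (pi / real w)) * x (swap L (i - 1))
        + hminus (cis (pi / real w)) * x (swap L (j - 1))"
      using base chain_end_rot_inv[OF one(2)] chain_end_rot_inv[OF one(3)] e by simp
    thus ?thesis unfolding e hplus_hminus_eq by simp
  next
    case mid
    have sw: "s \<le> w" "1 \<le> s" "L < w" using link_sym[OF mid(2)] by auto
    have s2: "link L (j - 1) = Some (w, s - 1, i - 1)" using link_sym[OF mid(3)] by simp
    define z' where "z' = cis (pi * real (s - 1) / real w)"
    have t1: "swap L (i - 1) = i - 1" "swap L (j - 1) = j - 1"
      using mid(3) s2 sw mid(1) by (auto simp: swap_def)
    have r1: "rot_inv L x (i - 1) = hplus (cnj z') * x (i - 1) + hminus (cnj z') * x (j - 1)"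
      using mid(3) by (simp add: rot_inv_def phase_def partner_def z'_def)
    have r2: "rot_inv L x (j - 1) = hplus (cnj z') * x (j - 1) + hminus (cnj z') * x (i - 1)"
      using s2 by (simp add: rot_inv_def phase_def partner_def z'_def)
    have zi: "phase L i = cis (pi * real s / real w)" "partner L i = j" "defect L i
        = (1 - cis (pi / real w)) / 2"
      using mid by (simp_all add: phase_def partner_def defect_def)
    have om: "cis (pi * real s / real w) * cnj z' = cis (pi / real w)"
    proof -
      have "cis (pi * real s / real w) * cnj z'
          = cis (pi * real s / real w - pi * real (s - 1) / real w)"
        by (simp add: z'_def cis_cnj cis_mult)
      also have "pi * real s / real w - pi * real (s - 1) / real w = pi / real w"
        using sw by (simp add: of_nat_diff field_simps)
      finally show ?thesis .
    qed
    have "rot L (ushift (rot_inv L x)) i = hplus (phase L i * cnj z') * x (i - 1)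
        + hminus (phase L i * cnj z') * x (j - 1)"
      unfolding base r1 zi(2) r2 by (rule hplus_hminus_mult)
    also have "\<dots> = hplus (cis (pi / real w)) * x (i - 1) + hminus (cis (pi / real w)) * x (j - 1)"
      using om zi by simp
    finally show ?thesis using zi t1 unfolding hplus_hminus_eq by (simp add: hminus_def)
  qed
qed

lemma swap_swap [simp]: "swap L (swap L i) = i"
proof (cases "link L i")
  case None thus ?thesis by (simp add: swap_def)
next
  case (Some a)
  then obtain w s j where a: "link L i = Some (w, s, j)" by (metis prod_cases3)
  show ?thesis using a link_sym[OF a] by (auto simp: swap_def)
qed

lemma swap_0 [simp]: "swap L 0 = 0" by (simp add: swap_def)

section \<open>Relabelling the coordinates\<close>

text \<open>In the order given by \<open>tw_succ\<close>, the quarters R of all blocks form the unilateral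
  summand, and the $k$-th bilateral summand runs through $\ldots, B_1, B_0, C_0, A_0, C_1, A_1,
  \ldots$, where $X_m$ is quarter $X$ of block \<open>enc k m\<close>; \<open>relabel\<close> places $C_0$ at
  $0$.\<close>

definition uni_offset :: "nat \<Rightarrow> nat \<Rightarrow> nat" where "uni_offset L t = (\<Sum>s<t. blk_len L s)"
definition bi_offset :: "nat \<Rightarrow> nat \<Rightarrow> nat \<Rightarrow> nat" where "bi_offset L k m
    = (\<Sum>m'<m. blk_len L (enc k m'))"

definition relabel :: "nat \<Rightarrow> nat \<Rightarrow> nat + nat \<times> int" where
  "relabel L i = (if i = 0 then Inl 0 else case blk_coords L i of (t, q, j) \<Rightarrow> case prod_decode t of (k, m) \<Rightarrow>
     if q = 0 then Inl (Suc (uni_offset L t + j))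
     else if q = 1 then Inr (k, int (2 * bi_offset L k m + blk_len L t + j))
     else if q = 2 then Inr (k, int j - int (bi_offset L k m + blk_len L t))
     else Inr (k, int (2 * bi_offset L k m + j)))"

lemma relabel_R: "j < blk_len L t \<Longrightarrow> relabel L (blk_pos L t 0 j) = Inl (Suc (uni_offset L t + j))"
  by (simp add: relabel_def blk_coords_blk_pos split: prod.split)
lemma relabel_A: "j < blk_len L (enc k m) \<Longrightarrow> relabel L (blk_pos L (enc k m) 1 j)
    = Inr (k, int (2 * bi_offset L k m + blk_len L (enc k m) + j))"
  by (simp add: relabel_def blk_coords_blk_pos)
lemma relabel_B: "j < blk_len L (enc k m) \<Longrightarrow> relabel L (blk_pos L (enc k m) 2 j)
    = Inr (k, int j - int (bi_offset L k m + blk_len L (enc k m)))"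
  by (simp add: relabel_def blk_coords_blk_pos)
lemma relabel_C: "j < blk_len L (enc k m) \<Longrightarrow> relabel L (blk_pos L (enc k m) 3 j)
    = Inr (k, int (2 * bi_offset L k m + j))"
  by (simp add: relabel_def blk_coords_blk_pos)
lemma relabel_0 [simp]: "relabel L 0 = Inl 0" by (simp add: relabel_def)

definition idx_succ :: "nat + nat \<times> int \<Rightarrow> nat + nat \<times> int" where
  "idx_succ y = (case y of Inl a \<Rightarrow> Inl (Suc a) | Inr (k, b) \<Rightarrow> Inr (k, b + 1))"
definition idx_pred :: "nat + nat \<times> int \<Rightarrow> nat + nat \<times> int" where
  "idx_pred y = (case y of Inl a \<Rightarrow> Inl (a - 1) | Inr (k, b) \<Rightarrow> Inr (k, b - 1))"

lemma idx_pred_idx_succ [simp]: "idx_pred (idx_succ y) = y"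
  by (auto simp: idx_pred_def idx_succ_def split: sum.split)

definition tw_succ :: "nat \<Rightarrow> nat \<Rightarrow> nat" where "tw_succ L i = Suc (swap L i)"
definition tw_pred :: "nat \<Rightarrow> nat \<Rightarrow> nat" where "tw_pred L i = swap L (i - 1)"

lemma tw_pred_tw_succ [simp]: "tw_pred L (tw_succ L i) = i" by (simp add: tw_succ_def tw_pred_def)
lemma tw_succ_tw_pred: "i \<ge> 1 \<Longrightarrow> tw_succ L (tw_pred L i) = i" by (simp add: tw_succ_def tw_pred_def)

lemma blk_pos_Suc_inside: "Suc (blk_pos L t q j) = blk_pos L t q (Suc j)" by (simp add: blk_pos_def)
lemma blk_pos_Suc_quarter: "q < 3 \<Longrightarrow> Suc (blk_pos L t q (blk_len L t - 1)) = blk_pos L t (Suc q) 0"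
  by (simp add: blk_pos_def blk_len_def algebra_simps)
lemma blk_pos_Suc_block: "Suc (blk_pos L t 3 (blk_len L t - 1)) = blk_pos L (Suc t) 0 0"
  by (simp add: blk_pos_def blk_len_def blk_start_Suc algebra_simps)

lemma uni_offset_Suc: "uni_offset L (Suc t) = uni_offset L t + blk_len L t"
  by (simp add: uni_offset_def)
lemma bi_offset_Suc: "bi_offset L k (Suc m) = bi_offset L k m + blk_len L (enc k m)"
  by (simp add: bi_offset_def)
lemma bi_offset_0 [simp]: "bi_offset L k 0 = 0" by (simp add: bi_offset_def)

lemma swap_inside:
  assumes q: "q < 4" and j: "Suc j < blk_len L (enc k m)"
  shows "swap L (blk_pos L (enc k m) q j) = blk_pos L (enc k m) q j"
proof -
  have jl: "j < blk_len L (enc k m)" using j by simp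
  have "q = 0 \<or> q = 1 \<or> q = 2 \<or> q = 3" using q by auto
  moreover
  { assume "q = 0" hence ?thesis using link_R[OF jl] j by (simp add: swap_def) }
  moreover
  { assume "q = 3" hence ?thesis using link_C[OF jl] j by (simp add: swap_def) }
  moreover
  { assume "q = 1" hence ?thesis using link_A[OF jl] j by (simp add: swap_def) }
  moreover
  { assume q2: "q = 2"
    have ?thesis
    proof (cases m)
      case 0 thus ?thesis using q2 link_B0 jl by (simp add: swap_def)
    next
      case (Suc m')
      have "enc k (Suc m') - enc k m' \<le> j
          \<Longrightarrow> Suc (j - (enc k (Suc m') - enc k m')) \<noteq> blk_len L (enc k m')"
        using j Suc enc_less[of k m'] by (simp add: blk_len_def)
      thus ?thesis using q2 Suc link_B[of j L k m'] jl by (simp add: swap_def)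
    qed }
  ultimately show ?thesis by blast
qed

lemma relabel_tw_succ_inside:
  assumes q: "q < 4" and j: "Suc j < blk_len L (enc k m)"
  shows "relabel L (tw_succ L (blk_pos L (enc k m) q j))
      = idx_succ (relabel L (blk_pos L (enc k m) q j))"
proof -
  have jl: "j < blk_len L (enc k m)" using j by simp
  have succ: "tw_succ L (blk_pos L (enc k m) q j) = blk_pos L (enc k m) q (Suc j)"
    using swap_inside[OF q j] by (simp add: tw_succ_def blk_pos_Suc_inside)
  have "q = 0 \<or> q = 1 \<or> q = 2 \<or> q = 3" using q by auto
  moreover have "q = 0 \<Longrightarrow> ?thesis"
    using succ relabel_R[OF jl] relabel_R[OF j] by (simp add: idx_succ_def)
  moreover have "q = 1 \<Longrightarrow> ?thesis"
    using succ relabel_A[OF jl] relabel_A[OF j] by (simp add: idx_succ_def)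
  moreover have "q = 2 \<Longrightarrow> ?thesis"
    using succ relabel_B[OF jl] relabel_B[OF j] by (simp add: idx_succ_def)
  moreover have "q = 3 \<Longrightarrow> ?thesis"
    using succ relabel_C[OF jl] relabel_C[OF j] by (simp add: idx_succ_def)
  ultimately show ?thesis by blast
qed

lemma relabel_tw_succ_quarter_last:
  assumes q: "q < 4" and t: "t = enc k m"
  shows "relabel L (tw_succ L (blk_pos L t q (blk_len L t - 1)))
       = idx_succ (relabel L (blk_pos L t q (blk_len L t - 1)))"
proof -
  let ?i = "blk_pos L t q (blk_len L t - 1)"
  have lp: "blk_len L t > 0" by (rule blk_len_pos)
  have le: "blk_len L t - 1 < blk_len L t" using lp by simp
  have e0: "Suc (blk_len L t - 1) = blk_len L t" using lp by simp
  consider "q = 0" | "q = 1" | "q = 2" | "q = 3" using q by linarith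
  thus ?thesis
  proof cases
    case 1
    have "swap L ?i = blk_pos L t 3 (blk_len L t - 1)"
      using 1 link_R[OF le] e0 by (simp add: swap_def)
    hence "tw_succ L ?i = blk_pos L (Suc t) 0 0"
      using blk_pos_Suc_block[of L t] by (simp add: tw_succ_def)
    thus ?thesis using 1 relabel_R[OF le] relabel_R[of 0 L "Suc t"] blk_len_pos[of L "Suc t"] lp
      by (simp add: idx_succ_def uni_offset_Suc)
  next
    case 2
    define t2 where "t2 = enc k (Suc m)"
    have tt: "t < t2" using enc_less[of k m] by (simp add: t t2_def)
    have e: "t2 - t + (blk_len L t - 1) = blk_len L t2 - 1" using tt by (simp add: blk_len_def)
    have "swap L ?i = blk_pos L t2 2 (blk_len L t2 - 1)"
      using 2 link_A[of "blk_len L t - 1" L k m] le e e0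
      by (simp add: swap_def t t2_def)
    hence "tw_succ L ?i = blk_pos L t2 3 0"
      using blk_pos_Suc_quarter[of 2 L t2] by (simp add: tw_succ_def)
    thus ?thesis using 2 relabel_A[of "blk_len L t
        - 1" L k m] relabel_C[of 0 L k "Suc m"] lp blk_len_pos[of L t2]
      by (simp add: idx_succ_def t t2_def bi_offset_Suc)
  next
    case 3
    show ?thesis
    proof (cases m)
      case 0
      have "swap L ?i = ?i" using 3 0 link_B0[of "blk_len L t - 1" L k] le by (simp add: swap_def t)
      hence "tw_succ L ?i = blk_pos L t 3 0"
        using blk_pos_Suc_quarter[of 2 L t] 3 by (simp add: tw_succ_def)
      thus ?thesis using relabel_B[of "blk_len L t - 1" L k 0] relabel_C[of 0 L k 0] lp 3 0
        by (simp add: idx_succ_def t)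
    next
      case (Suc m')
      define t1 where "t1 = enc k m'"
      have tt: "t1 < t" using enc_less[of k m'] Suc by (simp add: t t1_def)
      have e: "blk_len L t - 1 - (t - t1) = blk_len L t1 - 1" using tt by (simp add: blk_len_def)
      have e2: "Suc (blk_len L t1 - 1) = blk_len L t1" using blk_len_pos[of L t1] by simp
      have dle: "t - t1 \<le> blk_len L t - 1" by (simp add: blk_len_def)
      have "link L ?i = Some (blk_len L t1, blk_len L t1, blk_pos L t1 1 (blk_len L t1 - 1))"
        using 3 Suc link_B[of "blk_len L t - 1" L k m'] le e e2 dle unfolding t t1_def by simp
      hence "swap L ?i = blk_pos L t1 1 (blk_len L t1 - 1)" by (simp add: swap_def)
      hence "tw_succ L ?i = blk_pos L t1 2 0"
        using blk_pos_Suc_quarter[of 1 L t1] by (simp add: tw_succ_def numeral_2_eq_2)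
      thus ?thesis using relabel_B[of "blk_len L t
          - 1" L k m] relabel_B[of 0 L k m'] lp blk_len_pos[of L t1] 3 Suc
        by (simp add: idx_succ_def t t1_def bi_offset_Suc)
    qed
  next
    case 4
    have "swap L ?i = blk_pos L t 0 (blk_len L t - 1)"
      using 4 link_C[OF le] e0 by (simp add: swap_def)
    hence "tw_succ L ?i = blk_pos L t 1 0"
      using blk_pos_Suc_quarter[of 0 L t] by (simp add: tw_succ_def)
    thus ?thesis using relabel_C[of "blk_len L t - 1" L k m] relabel_A[of 0 L k m] lp 4
      by (simp add: idx_succ_def t)
  qed
qed

lemma relabel_tw_succ: "relabel L (tw_succ L i) = idx_succ (relabel L i)"
proof (cases "i = 0")
  case True
  thus ?thesis using relabel_R[of 0 L 0] blk_pos_first[of L] blk_len_pos[of L 0]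
    by (simp add: tw_succ_def idx_succ_def uni_offset_def)
next
  case False
  then obtain k m q j where q: "q < 4" and j: "j < blk_len L (enc k m)" and i: "i
      = blk_pos L (enc k m) q j"
    using blk_pos_cases[of i] by (metis less_one not_le)
  show ?thesis
  proof (cases "Suc j < blk_len L (enc k m)")
    case True thus ?thesis using relabel_tw_succ_inside[OF q] i by simp
  next
    case False
    hence "j = blk_len L (enc k m) - 1" using j by simp
    thus ?thesis using relabel_tw_succ_quarter_last[OF q refl] i by simp
  qed
qed

definition bi_origin :: "nat \<Rightarrow> nat \<Rightarrow> nat" where "bi_origin L k = blk_pos L (enc k 0) 3 0"

lemma relabel_bi_origin: "relabel L (bi_origin L k) = Inr (k, 0)"
  using relabel_C[of 0 L k 0] blk_len_pos[of L "enc k 0"] by (simp add: bi_origin_def)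

lemma relabel_eq_Inl0: "relabel L i = Inl 0 \<Longrightarrow> i = 0"
proof (rule ccontr)
  assume a: "relabel L i = Inl 0" "i \<noteq> 0"
  then obtain k m q j where q: "q < 4" and jl: "j < blk_len L (enc k m)" and i: "i
      = blk_pos L (enc k m) q j"
    using blk_pos_cases[of i] by (metis less_one not_le)
  have "q = 0 \<or> q = 1 \<or> q = 2 \<or> q = 3" using q by auto
  thus False using a i relabel_R[OF jl] relabel_A[OF jl] relabel_B[OF jl] relabel_C[OF jl] by auto
qed

lemma bi_offset_pos: "m > 0 \<Longrightarrow> bi_offset L k m > 0"
  by (cases m) (auto simp: bi_offset_Suc blk_len_def)

lemma relabel_eq_Inr0: "relabel L i = Inr (k, 0) \<Longrightarrow> i = bi_origin L k"
proof -
  assume a: "relabel L i = Inr (k, 0)"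
  have "i \<noteq> 0" using a by (metis Inl_Inr_False relabel_0)
  then obtain k' m q j where q: "q < 4" and jl: "j < blk_len L (enc k' m)" and i: "i
      = blk_pos L (enc k' m) q j"
    using blk_pos_cases[of i] by (metis less_one not_le)
  have "q = 0 \<or> q = 1 \<or> q = 2 \<or> q = 3" using q by auto
  moreover have "q \<noteq> 0"
  proof
    assume "q = 0" thus False using a i relabel_R[OF jl] by simp
  qed
  moreover have "q \<noteq> 1" using a i relabel_A[OF jl] blk_len_pos[of L "enc k' m"] by auto
  moreover have "q \<noteq> 2" using a i relabel_B[OF jl] jl by auto
  moreover have "q = 3 \<Longrightarrow> i = bi_origin L k"
  proof -
    assume q3: "q = 3"
    have "k' = k" "2 * bi_offset L k' m + j = 0" using a i q3 relabel_C[OF jl] by auto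
    hence "m = 0" "j = 0" using bi_offset_pos[of m L k'] by auto
    thus ?thesis using i q3 \<open>k' = k\<close> by (simp add: bi_origin_def)
  qed
  ultimately show ?thesis by blast
qed

lemma relabel_tw_pred: "x \<ge> 1 \<Longrightarrow> relabel L (tw_pred L x) = idx_pred (relabel L x)"
  using relabel_tw_succ[of L "tw_pred L x"] tw_succ_tw_pred[of x L] by simp

definition relabel_inv :: "nat \<Rightarrow> nat + nat \<times> int \<Rightarrow> nat" where
  "relabel_inv L y = (case y of Inl a \<Rightarrow> (tw_succ L ^^ a) 0
     | Inr (k, b) \<Rightarrow> if 0 \<le> b then (tw_succ L ^^ nat b) (bi_origin L k) else (tw_pred L ^^ nat (- b)) (bi_origin L k))"

lemma relabel_tw_succ_pow: "relabel L ((tw_succ L ^^ n) x) = (idx_succ ^^ n) (relabel L x)"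
  by (induction n) (auto simp: relabel_tw_succ)

lemma idx_succ_pow_Inl: "(idx_succ ^^ n) (Inl a) = Inl (a + n)"
  by (induction n) (auto simp: idx_succ_def)
lemma idx_succ_pow_Inr: "(idx_succ ^^ n) (Inr (k, b)) = Inr (k, b + int n)"
  by (induction n) (auto simp: idx_succ_def)

lemma relabel_tw_pred_pow: "relabel L ((tw_pred L ^^ n) (bi_origin L k)) = Inr (k, - int n)"
proof (induction n)
  case 0 thus ?case by (simp add: relabel_bi_origin)
next
  case (Suc n)
  have "(tw_pred L ^^ n) (bi_origin L k) \<noteq> 0" using Suc by (metis Inl_Inr_False relabel_0)
  hence "relabel L (tw_pred L ((tw_pred L ^^ n) (bi_origin L k)))
      = idx_pred (relabel L ((tw_pred L ^^ n) (bi_origin L k)))"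
    by (intro relabel_tw_pred) simp
  thus ?case using Suc by (simp add: idx_pred_def)
qed

lemma relabel_relabel_inv: "relabel L (relabel_inv L y) = y"
proof (cases y)
  case (Inl a) thus ?thesis by (simp add: relabel_inv_def relabel_tw_succ_pow idx_succ_pow_Inl)
next
  case (Inr kb)
  then obtain k b where y: "y = Inr (k, b)" by (cases kb) auto
  show ?thesis
  proof (cases "0 \<le> b")
    case True thus ?thesis
      using y by (simp add: relabel_inv_def relabel_tw_succ_pow relabel_bi_origin idx_succ_pow_Inr)
  next
    case False thus ?thesis using y by (simp add: relabel_inv_def relabel_tw_pred_pow)
  qed
qed

definition idx_size :: "nat + nat \<times> int \<Rightarrow> nat" where
  "idx_size y = (case y of Inl a \<Rightarrow> a | Inr (k, b) \<Rightarrow> nat \<bar>b\<bar>)"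

lemma relabel_inv_relabel: "relabel_inv L (relabel L i) = i"
proof -
  have "\<forall>i. idx_size (relabel L i) = n \<longrightarrow> relabel_inv L (relabel L i) = i" for n
  proof (induction n rule: less_induct)
    case (less n)
    show ?case
    proof (intro allI impI)
      fix i assume mi: "idx_size (relabel L i) = n"
      show "relabel_inv L (relabel L i) = i"
      proof (cases "relabel L i")
        case (Inl a)
        show ?thesis
        proof (cases a)
          case 0 thus ?thesis using Inl relabel_eq_Inl0[of L i] by (simp add: relabel_inv_def)
        next
          case (Suc a')
          have i1: "i \<ge> 1" using Inl Suc by (cases i) auto
          have pg: "relabel L (tw_pred L i) = Inl a'"
            using relabel_tw_pred[OF i1, of L] Inl Suc by (simp add: idx_pred_def)
          have "relabel_inv L (Inl a') = tw_pred L i"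
            using less[rule_format, of a' "tw_pred L i"] pg mi Inl Suc by (simp add: idx_size_def)
          hence "relabel_inv L (Inl a) = tw_succ L (tw_pred L i)"
            using Suc by (simp add: relabel_inv_def)
          thus ?thesis using Inl tw_succ_tw_pred[OF i1] by simp
        qed
      next
        case (Inr kb)
        then obtain k b where pb: "relabel L i = Inr (k, b)" by (cases kb) auto
        consider "b = 0" | "b > 0" | "b < 0" by linarith
        thus ?thesis
        proof cases
          case 1 thus ?thesis using pb relabel_eq_Inr0[of L i k] by (simp add: relabel_inv_def)
        next
          case 2
          have i1: "i \<ge> 1" using pb by (cases i) auto
          have pg: "relabel L (tw_pred L i) = Inr (k, b - 1)"
            using relabel_tw_pred[OF i1, of L] pb by (simp add: idx_pred_def)
          have "relabel_inv L (Inr (k, b - 1)) = tw_pred L i"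
            using less[rule_format, of "nat \<bar>b - 1\<bar>" "tw_pred L i"] pg mi pb 2
              by (simp add: idx_size_def)
          hence "(tw_succ L ^^ nat (b - 1)) (bi_origin L k) = tw_pred L i"
            using 2 by (simp add: relabel_inv_def)
          moreover have "nat b = Suc (nat (b - 1))" using 2 by simp
          ultimately have "relabel_inv L (Inr (k, b)) = tw_succ L (tw_pred L i)"
            using 2 by (simp add: relabel_inv_def)
          thus ?thesis using pb tw_succ_tw_pred[OF i1] by simp
        next
          case 3
          have pg: "relabel L (tw_succ L i) = Inr (k, b + 1)"
            using relabel_tw_succ[of L i] pb by (simp add: idx_succ_def)
          have "relabel_inv L (Inr (k, b + 1)) = tw_succ L i"
            using less[rule_format, of "nat \<bar>b + 1\<bar>" "tw_succ L i"] pg mi pb 3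
              by (simp add: idx_size_def)
          moreover have "relabel_inv L (Inr (k, b)) = tw_pred L (relabel_inv L (Inr (k, b + 1)))"
          proof (cases "b + 1 = 0")
            case True
            hence "b = -1" by simp
            thus ?thesis by (simp add: relabel_inv_def)
          next
            case False
            hence "nat (- b) = Suc (nat (- (b + 1)))" using 3 by simp
            thus ?thesis using 3 False by (simp add: relabel_inv_def)
          qed
          ultimately show ?thesis using pb by simp
        qed
      qed
    qed
  qed
  thus ?thesis by blast
qed

lemma relabel_inv_inj: "inj (relabel_inv L)" by (metis injI relabel_relabel_inv)
lemma relabel_inj: "inj (relabel L)" by (metis injI relabel_inv_relabel)

lemma relabel_tw_pred_relabel_inv: "t \<noteq> Inl 0 \<Longrightarrow> relabel_inv L t \<ge> 1
    \<and> relabel L (tw_pred L (relabel_inv L t)) = idx_pred t"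
proof -
  assume t: "t \<noteq> Inl 0"
  have "relabel_inv L t \<noteq> 0" using t relabel_relabel_inv[of L t] by (metis relabel_0)
  thus ?thesis using relabel_tw_pred[of "relabel_inv L t" L] relabel_relabel_inv[of L t] by simp
qed

lemma norm_one_minus_cis_le: "cmod (1 - cis a) \<le> \<bar>a\<bar>"
proof -
  have "(cmod (1 - cis a))\<^sup>2 = (1 - cos a)\<^sup>2 + (sin a)\<^sup>2" by (simp add: cmod_power2)
  also have "\<dots> = 2 - 2 * cos a"
    using sin_cos_squared_add[of a] by (simp add: power2_eq_square algebra_simps)
  also have "cos a = 1 - 2 * sin (a/2) ^ 2" using cos_double_sin[of "a/2"] by simp
  also have "2 - 2 * (1 - 2 * sin (a/2) ^ 2) = 4 * (sin (a/2))\<^sup>2" by simp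
  also have "\<dots> \<le> 4 * (a/2)\<^sup>2"
    using abs_sin_x_le_abs_x[of "a/2"]
      by (intro mult_left_mono) (auto simp: abs_le_square_iff[symmetric] power2_abs)
  also have "\<dots> = \<bar>a\<bar>\<^sup>2" by (simp add: power2_eq_square)
  finally show ?thesis by (rule power2_le_imp_le) simp
qed

lemma norm_defect_le: "cmod (defect L i) \<le> pi / (2 * real (Suc L))"
proof (cases "link L i")
  case None thus ?thesis by (simp add: defect_def)
next
  case (Some a)
  then obtain w s j where a: "link L i = Some (w, s, j)" by (metis prod_cases3)
  have w: "L < w" using link_sym[OF a] by simp
  have "cmod (defect L i) = cmod (1 - cis (pi / real w)) / 2"
    using a by (simp add: defect_def norm_divide)
  also have "\<dots> \<le> \<bar>pi / real w\<bar> / 2" by (intro divide_right_mono norm_one_minus_cis_le) simp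
  also have "\<bar>pi / real w\<bar> = pi / real w" using w by simp
  also have "pi / real w \<le> pi / real (Suc L)" using w by (intro divide_left_mono) auto
  finally show ?thesis by (simp add: mult.commute)
qed

lemma norm_defect_le_link: "link L i = Some (w, s, j) \<Longrightarrow> cmod (defect L i) \<le> pi / (2 * real w)"
proof -
  assume a: "link L i = Some (w, s, j)"
  have w: "L < w" using link_sym[OF a] by simp
  have "cmod (defect L i) = cmod (1 - cis (pi / real w)) / 2"
    using a by (simp add: defect_def norm_divide)
  also have "\<dots> \<le> \<bar>pi / real w\<bar> / 2" by (intro divide_right_mono norm_one_minus_cis_le) simp
  also have "\<bar>pi / real w\<bar> = pi / real w" using w by simp
  finally show ?thesis by simp
qed

lemma link_bound: "link L i = Some (w, s, j) \<Longrightarrow> i < blk_pos L (2 * w + 2) 0 0"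
proof -
  assume a: "link L i = Some (w, s, j)"
  have "i \<ge> 1" using a by (cases i) auto
  then obtain k m q jj where q: "q < 4" and jj: "jj < blk_len L (enc k m)" and i: "i
      = blk_pos L (enc k m) q jj"
    by (rule blk_pos_cases)
  have "Suc (enc k m) \<le> 2 * w + 2"
  proof -
    have "q = 0 \<or> q = 1 \<or> q = 2 \<or> q = 3" using q by auto
    moreover have "q \<noteq> 2 \<Longrightarrow> w = blk_len L (enc k m)"
      using a i link_R[OF jj] link_A[OF jj] link_C[OF jj] calculation by auto
    moreover have "q = 2 \<Longrightarrow> Suc (enc k m) \<le> 2 * w + 2"
    proof (cases m)
      case 0 thus "q = 2 \<Longrightarrow> ?thesis" using a i link_B0[OF jj[unfolded 0]] by simp
    next
      case (Suc m')
      assume q2: "q = 2"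
      have "w = blk_len L (enc k m')"
        using a i q2 Suc link_B[of jj L k m'] jj by (auto split: if_splits)
      thus ?thesis using enc_Suc_le[of k m'] Suc by (simp add: blk_len_def)
    qed
    ultimately show ?thesis by (auto simp: blk_len_def)
  qed
  thus ?thesis using blk_pos_less_next_block[OF q jj] blk_pos_block_mono[of "Suc (enc k m)" "2 * w
      + 2" L 0 0] i by simp
qed

lemma finite_defect_ge:
  assumes e: "e > 0"
  shows "finite {i. e \<le> cmod (defect L i)}"
proof -
  define W where "W = nat \<lceil>pi / (2 * e)\<rceil>"
  have "{i. e \<le> cmod (defect L i)} \<subseteq> {..< blk_pos L (2 * W + 2) 0 0}"
  proof
    fix i assume "i \<in> {i. e \<le> cmod (defect L i)}"
    hence ei: "e \<le> cmod (defect L i)" by simp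
    then obtain w s j where a: "link L i = Some (w, s, j)" using e
      by (cases "link L i") (auto simp: defect_def)
    have wp: "L < w" using link_sym[OF a] by simp
    have "e \<le> pi / (2 * real w)" using ei norm_defect_le_link[OF a] by simp
    hence "real w \<le> pi / (2 * e)" using e wp by (simp add: field_simps)
    hence "w \<le> W" unfolding W_def by linarith
    hence "blk_pos L (2 * w + 2) 0 0 \<le> blk_pos L (2 * W + 2) 0 0" by (intro blk_pos_block_mono) simp
    thus "i \<in> {..< blk_pos L (2 * W + 2) 0 0}" using link_bound[OF a] by simp
  qed
  thus ?thesis by (rule finite_subset) simp
qed

section \<open>The similarity and its defect\<close>

definition sim :: "nat \<Rightarrow> (nat \<Rightarrow> complex) \<Rightarrow> (nat + nat \<times> int \<Rightarrow> complex)" where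
  "sim L x = (\<lambda>t. rot L x (relabel_inv L t))"
definition sim_inv :: "nat \<Rightarrow> (nat + nat \<times> int \<Rightarrow> complex) \<Rightarrow> (nat \<Rightarrow> complex)" where
  "sim_inv L y = rot_inv L (\<lambda>i. y (relabel L i))"

lemma sim_inv_sim: "sim_inv L (sim L x) = x"
  unfolding sim_inv_def sim_def by (simp add: relabel_inv_relabel rot_inv_rot)

lemma sim_sim_inv: "sim L (sim_inv L y) = y"
  unfolding sim_inv_def sim_def by (simp add: relabel_relabel_inv rot_rot_inv)

lemma partner_inj: "inj (partner L)" by (metis injI partner_partner)
lemma swap_inj: "inj (swap L)" by (metis injI swap_swap)

lemma norm_hplus_le: "cmod z = 1 \<Longrightarrow> cmod (hplus z) \<le> 1"
proof -
  assume z: "cmod z = 1"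
  have "cmod (1 + z) \<le> 2" using norm_triangle_ineq[of 1 z] z by simp
  thus ?thesis by (simp add: hplus_def norm_divide)
qed
lemma norm_hminus_le: "cmod z = 1 \<Longrightarrow> cmod (hminus z) \<le> 1"
proof -
  assume z: "cmod z = 1"
  have "cmod (1 - z) \<le> 2" using norm_triangle_ineq4[of 1 z] z by simp
  thus ?thesis by (simp add: hminus_def norm_divide)
qed

lemma sim_eq_weighted_comp2:
  "sim L = weighted_comp2 (\<lambda>t. hplus (phase L (relabel_inv L t))) (relabel_inv L)
     (\<lambda>t. hminus (phase L (relabel_inv L t))) (\<lambda>t. partner L (relabel_inv L t))"
  by (simp add: sim_def weighted_comp2_def rot_def fun_eq_iff)

lemma sim_inv_eq_weighted_comp2:
  "sim_inv L = weighted_comp2 (\<lambda>i. hplus (cnj (phase L i))) (relabel L)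
     (\<lambda>i. hminus (cnj (phase L i))) (\<lambda>i. relabel L (partner L i))"
  by (simp add: sim_inv_def weighted_comp2_def rot_inv_def fun_eq_iff)

abbreviation model_shift :: "(nat + nat \<times> int \<Rightarrow> complex) \<Rightarrow> (nat + nat \<times> int \<Rightarrow> complex)" where
  "model_shift \<equiv> dsum_op ushift (\<lambda>_. bshift)"

lemma model_shift_eq: "model_shift y t = (if t = Inl 0 then 0 else y (idx_pred t))"
  by (cases t) (auto simp: dsum_op_def ushift_def bshift_def idx_pred_def)

lemma sim_defect_eq:
  "(\<lambda>y j. model_shift y j - sim L (ushift (sim_inv L y)) j) =
    weighted_comp2 (\<lambda>t. defect L (relabel_inv L t)) (\<lambda>t. relabel L (swap L (relabel_inv L t - 1)))
      (\<lambda>t. - defect L (relabel_inv L t)) (\<lambda>t. relabel L (swap L (partner L (relabel_inv L t) - 1)))"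
  (is "_ = ?D")
proof (intro ext)
  fix y t
  show "model_shift y t - sim L (ushift (sim_inv L y)) t = ?D y t"
  proof (cases "t = Inl 0")
    case True
    have "relabel_inv L t = 0" using True by (simp add: relabel_inv_def)
    thus ?thesis using True
      by (simp add: model_shift_eq sim_def rot_def ushift_def weighted_comp2_def)
  next
    case False
    from relabel_tw_pred_relabel_inv[OF False, of L]
    have c: "relabel_inv L t \<ge> 1" "relabel L (tw_pred L (relabel_inv L t)) = idx_pred t" by auto
    have "sim L (ushift (sim_inv L y)) t
        = rot L (ushift (rot_inv L (\<lambda>i. y (relabel L i)))) (relabel_inv L t)"
      by (simp add: sim_def sim_inv_def)
    also have "\<dots> = y (relabel L (swap L (relabel_inv L t - 1))) - defect L (relabel_inv L t) *
        (y (relabel L (swap L (relabel_inv L t - 1))) - y (relabel L (swap L (partner L (relabel_inv L t) - 1))))"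
      by (rule rot_shift_rot_inv[OF c(1)])
    finally show ?thesis
      using False c by (simp add: model_shift_eq weighted_comp2_def tw_pred_def algebra_simps)
  qed
qed

lemma relabel_inv_ge1_of_defect: "defect L (relabel_inv L t) \<noteq> 0 \<Longrightarrow> relabel_inv L t \<ge> 1"
  by (cases "relabel_inv L t") auto

lemma inj_on_defect_src: "inj_on (\<lambda>t. relabel L (swap L (relabel_inv L t
    - 1))) {t. defect L (relabel_inv L t) \<noteq> 0}"
proof (rule inj_onI)
  fix a b assume a: "a \<in> {t. defect L (relabel_inv L t) \<noteq> 0}" and b: "b \<in> {t. defect L (relabel_inv L t) \<noteq> 0}"
    and e: "relabel L (swap L (relabel_inv L a - 1)) = relabel L (swap L (relabel_inv L b - 1))"
  have "swap L (relabel_inv L a - 1) = swap L (relabel_inv L b - 1)"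
    using e relabel_inj by (metis injD)
  hence "relabel_inv L a - 1 = relabel_inv L b - 1" using swap_inj by (metis injD)
  moreover have "relabel_inv L a \<ge> 1" "relabel_inv L b \<ge> 1"
    using a b relabel_inv_ge1_of_defect by auto
  ultimately have "relabel_inv L a = relabel_inv L b" by simp
  thus "a = b" using relabel_inv_inj by (metis injD)
qed

lemma inj_on_defect_src': "inj_on (\<lambda>t. relabel L (swap L (partner L (relabel_inv L t) - 1))) {t.
    - defect L (relabel_inv L t) \<noteq> 0}"
proof (rule inj_onI)
  fix a b assume a: "a \<in> {t. - defect L (relabel_inv L t) \<noteq> 0}" and b: "b \<in> {t.
      - defect L (relabel_inv L t) \<noteq> 0}"
    and e: "relabel L (swap L (partner L (relabel_inv L a) - 1))
        = relabel L (swap L (partner L (relabel_inv L b) - 1))"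
  have "swap L (partner L (relabel_inv L a) - 1) = swap L (partner L (relabel_inv L b) - 1)"
    using e relabel_inj by (metis injD)
  hence "partner L (relabel_inv L a) - 1 = partner L (relabel_inv L b) - 1"
    using swap_inj by (metis injD)
  moreover have "relabel_inv L a \<ge> 1" "relabel_inv L b \<ge> 1"
    using a b relabel_inv_ge1_of_defect by auto
  hence "partner L (relabel_inv L a) \<ge> 1" "partner L (relabel_inv L b) \<ge> 1"
    using partner_ge1 by auto
  ultimately have "partner L (relabel_inv L a) = partner L (relabel_inv L b)" by simp
  hence "relabel_inv L a = relabel_inv L b" using partner_inj by (metis injD)
  thus "a = b" using relabel_inv_inj by (metis injD)
qed

lemma inj_partner_relabel_inv: "inj_on (\<lambda>t. partner L (relabel_inv L t)) A"
  using inj_compose[OF partner_inj relabel_inv_inj, of L] by (simp add: inj_on_def)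

lemma inj_relabel_partner: "inj_on (\<lambda>i. relabel L (partner L i)) A"
  using inj_compose[OF relabel_inj partner_inj, of L] by (simp add: inj_on_def)

section \<open>Norm estimates and compactness\<close>

lemma sim_bounded:
  assumes "1 \<le> p"
  shows "bounded_op p (sim L)" "0 \<le> op_norm p (sim L)" "op_norm p (sim L) \<le> 4"
proof -
  have c: "cmod (hplus (phase L (relabel_inv L t))) \<le> 1" "cmod (hminus (phase L (relabel_inv L t)))
      \<le> 1" for t
    by (simp_all add: norm_hplus_le norm_hminus_le)
  have inj: "inj_on (relabel_inv L) A" for A by (rule inj_on_subset[OF relabel_inv_inj subset_UNIV])
  show "bounded_op p (sim L)" "0 \<le> op_norm p (sim L)" "op_norm p (sim L) \<le> 4"
    unfolding sim_eq_weighted_comp2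
    using bounded_op_weighted_comp2[OF assms c inj inj_partner_relabel_inv] by simp_all
qed

lemma sim_inv_bounded:
  assumes "1 \<le> p"
  shows "bounded_op p (sim_inv L)" "0 \<le> op_norm p (sim_inv L)" "op_norm p (sim_inv L) \<le> 4"
proof -
  have c: "cmod (hplus (cnj (phase L i))) \<le> 1" "cmod (hminus (cnj (phase L i))) \<le> 1" for i
    by (simp_all add: norm_hplus_le norm_hminus_le)
  have inj: "inj_on (relabel L) A" for A by (rule inj_on_subset[OF relabel_inj subset_UNIV])
  show "bounded_op p (sim_inv L)" "0 \<le> op_norm p (sim_inv L)" "op_norm p (sim_inv L) \<le> 4"
    unfolding sim_inv_eq_weighted_comp2
    using bounded_op_weighted_comp2[OF assms c inj inj_relabel_partner] by simp_all
qed

lemma sim_defect_compact_small: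
  assumes "1 \<le> p"
  shows "compact_op p (\<lambda>y j. model_shift y j - sim L (ushift (sim_inv L y)) j)"
    "0 \<le> op_norm p (\<lambda>y j. model_shift y j - sim L (ushift (sim_inv L y)) j)"
    "op_norm p (\<lambda>y j. model_shift y j - sim L (ushift (sim_inv L y)) j) \<le> 2 * pi / real (Suc L)"
proof -
  define M where "M = pi / (2 * real (Suc L))"
  have c: "cmod (defect L (relabel_inv L t)) \<le> M" "cmod (- defect L (relabel_inv L t)) \<le> M" for t
    using norm_defect_le by (simp_all add: M_def)
  have vanish: "finite {t. d \<le> cmod (defect L (relabel_inv L t)) \<or> d
      \<le> cmod (- defect L (relabel_inv L t))}"
    if "d > 0" for d
  proof -
    have "{t. d \<le> cmod (defect L (relabel_inv L t)) \<or> d \<le> cmod (- defect L (relabel_inv L t))}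
        = relabel_inv L -` {i. d \<le> cmod (defect L i)}" by auto
    thus ?thesis using finite_vimageI[OF finite_defect_ge[OF that] relabel_inv_inj] by simp
  qed
  show "compact_op p (\<lambda>y j. model_shift y j - sim L (ushift (sim_inv L y)) j)"
    unfolding sim_defect_eq
      by (rule compact_op_weighted_comp2[OF assms c inj_on_defect_src inj_on_defect_src' vanish])
  have "4 * M = 2 * pi / real (Suc L)" by (simp add: M_def field_simps)
  thus "0 \<le> op_norm p (\<lambda>y j. model_shift y j - sim L (ushift (sim_inv L y)) j)"
    "op_norm p (\<lambda>y j. model_shift y j - sim L (ushift (sim_inv L y)) j) \<le> 2 * pi / real (Suc L)"
    unfolding sim_defect_eq
      using bounded_op_weighted_comp2[OF assms c inj_on_defect_src inj_on_defect_src'] by simp_all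
qed

theorem corollary4p2:
  fixes p :: real
  assumes "1 < p"
  shows "approx_similar p ushift (dsum_op ushift (\<lambda>_. bshift))"
proof -
  have p: "1 \<le> p" using assms by simp
  note sim = sim_bounded[OF p] and sim_inv = sim_inv_bounded[OF p] and defect = sim_defect_compact_small[OF p]
  have norm_prod: "op_norm p (sim L) * op_norm p (sim_inv L) \<le> 16" for L
    using mult_mono[OF sim(3)[of L] sim_inv(3)[of L]] sim_inv(2)[of L] by simp
  have lim: "(\<lambda>L. 2 * pi / real (Suc L)) \<longlonglongrightarrow> 0"
    using LIMSEQ_Suc[OF lim_const_over_n[of "2 * pi"]] by simp
  have "(\<lambda>L. op_norm p (\<lambda>y j. model_shift y j - sim L (ushift (sim_inv L y)) j)) \<longlonglongrightarrow> 0"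
    by (rule tendsto_sandwich[OF _ _ tendsto_const lim]) (use defect(2,3) in auto)
  thus ?thesis
    unfolding approx_similar_def using sim(1) sim_inv(1) defect(1) norm_prod sim_inv_sim sim_sim_inv
    by (intro exI[of _ 16] conjI exI[of _ sim] exI[of _ sim_inv] allI ballI) auto
qed

end
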